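(* Fix either version $B=X$ or $B=D$ and an admissible order ideal $\mathcal I$ in $\mathcal P$. Let $0<\varepsilon<1$ and let $L$ be an upper bound for the lengths of the flags in $\Delta(\mathcal I)$. Then for every $A\in B[\mathbb I]$ with $\kappa(A)<\varepsilon^L$ there exist a flag $\varphi=(\mathfrak f(1)\supsetneq\dots\supsetneq\mathfrak f(m))\in\Delta(\mathcal I)$ of length $m>0$ and an operator $B\in B[\mathfrak f(1)]$ such that $|B-\bar\chi^{\mathfrak f(1)}|<\varepsilon$ and $A$ lies in the convex hull (a simplex) of $\{B\}\cup\{\bar\chi^{\mathfrak f(s)}:2\le s\le m\}$.
   Context: $\mathfrak g$ is the Lie algebra of a compact Lie group with Euclidean inner product $Q$ satisfying $Q([X,Y],Z)=Q(X,[Y,Z])$; linear operators are symmetric if $Q(AX,Y)=Q(X,AY)$; $|A|=\sqrt{\mathrm{tr}(A^2)}$ for symmetric $A$. For symmetric $A$, $F_a$ is the span of eigenvectors with eigenvalue $\le a$; $A$ is filtering if $[F_a,F_b]\subseteq F_{a+b}$ for all $a,b$; $\mathfrak F_+$ = filtering symmetric operators with nonnegative spectrum and trace $1$. $\mathfrak h\subsetneq\mathfrak g$ fixed subalgebra, $\mathcal A$ a compact group of automorphisms of $\mathfrak g$ preserving $\mathfrak h$ and $Q$. $\mathcal P$ = set of $\mathcal A$-invariant subalgebras $\mathfrak k$ with $\mathfrak h\subsetneq\mathfrak k\subseteq\mathfrak g$. Admissible order ideal: $\mathcal I\subseteq\mathcal P$ closed under passing to smaller members of $\mathcal P$, $\mathfrak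 g\notin\mathcal I$, $\mathcal I$ and $\mathcal P\setminus\mathcal I$ compact semialgebraic (in the disjoint union of Grassmannians). For $\mathfrak k\in\mathcal P\setminus\{\mathfrak g\}$: $\bar\chi^{\mathfrak k}=\frac{1}{\dim(\mathfrak g/\mathfrak k)}(1_{\mathfrak g}-1_{\mathfrak k})$ ($Q$-orthogonal projections); $D[\mathfrak k]$ = symmetric operators with nonnegative spectrum, trace $1$, commuting with $\mathcal A$, annihilating $\mathfrak k$, commuting with $\mathrm{ad}(X)$ for $X\in\mathfrak k$; $X[\mathfrak k]=D[\mathfrak k]\cap\mathfrak F_+$; $D[\mathfrak g]=X[\mathfrak g]=\emptyset$. Flags $\varphi=(\mathfrak f_1\supsetneq\dots\supsetneq\mathfrak f_r)$, $r\ge1$, $\mathfrak f_i\in\mathcal P$, $\max\varphi=\mathfrak f_1$; $\Delta(\mathcal S)$ = flags with members in $\mathcal S$; $/\chi/$ = convex hull of $\{\bar\chi^{\mathfrak f}:\mathfrak f\in\chi\}$. Butterflies: $B[(\mathfrak f)]=B[\mathfrak f]$; if $r>1$, $\mathfrak f_1=\mathfrak g$: $B[\varphi]=/(\mathfrak f_2,\dots,\mathfrak f_r)/$; if $r>1$, $\mathfrak f_1\ne\mathfrak g$: the union of closed segments joining $B[\mathfrak f_1]$ to $/(\mathfrak f_2,\dots,\mathfrak f_r)/$, which is the join of these sets. $\mathbb I=\{\varphi\in\Delta(\mathcal P)\setminus\Delta(\mathcal I):\varphi\setminus\{\max\varphi\}\subseteq\mathcal I\}$, $B[\mathbb I]=\bigcup_{\varphi\in\mathbb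 I}B[\varphi]$. The function $\kappa:B[\mathbb I]\to[0,1]$: for $A\in B[\varphi]$, $\varphi\in\mathbb I$, put $\kappa(A)=0$ if $\max\varphi=\mathfrak g$, $\kappa(A)=1$ if $\varphi$ has length $1$, and otherwise $\kappa(A)$ is the number with $A=(1-\kappa)A_1+\kappa A_2$, $A_1\in/(\mathfrak f_2,\dots,\mathfrak f_r)/$, $A_2\in B[\mathfrak f_1]$ (this value does not depend on the choice of $\varphi$). *)

theory Defs
  imports "HOL-Analysis.Analysis"
begin

(* The Lie algebra g is modelled as a euclidean_space type 'a; Q is its inner product;
   the bracket is a function br. Operators are bounded linear maps 'a \<Rightarrow>\<^sub>L 'a. *)

definition lie_algebra_with_invariant_Q :: "('a::euclidean_space \<Rightarrow> 'a \<Rightarrow> 'a) \<Rightarrow> bool" where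
  "lie_algebra_with_invariant_Q br \<longleftrightarrow>
     bilinear br \<and>
     (\<forall>x. br x x = 0) \<and>
     (\<forall>x y z. br x (br y z) + br y (br z x) + br z (br x y) = 0) \<and>
     (\<forall>x y z. inner (br x y) z = inner x (br y z))"

definition subalgebra :: "('a::euclidean_space \<Rightarrow> 'a \<Rightarrow> 'a) \<Rightarrow> 'a set \<Rightarrow> bool" where
  "subalgebra br k \<longleftrightarrow> subspace k \<and> (\<forall>x\<in>k. \<forall>y\<in>k. br x y \<in> k)"

definition automorphism_group ::
  "('a::euclidean_space \<Rightarrow> 'a \<Rightarrow> 'a) \<Rightarrow> 'a set \<Rightarrow> ('a \<Rightarrow>\<^sub>L 'a) set \<Rightarrow> bool" where
  "automorphism_group br h Aut \<longleftrightarrow>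
     id_blinfun \<in> Aut \<and>
     (\<forall>\<sigma>\<in>Aut. \<forall>\<tau>\<in>Aut. \<sigma> o\<^sub>L \<tau> \<in> Aut) \<and>
     (\<forall>\<sigma>\<in>Aut. \<exists>\<tau>\<in>Aut. \<sigma> o\<^sub>L \<tau> = id_blinfun \<and> \<tau> o\<^sub>L \<sigma> = id_blinfun) \<and>
     (\<forall>\<sigma>\<in>Aut. \<forall>x y. \<sigma> (br x y) = br (\<sigma> x) (\<sigma> y)) \<and>
     (\<forall>\<sigma>\<in>Aut. \<forall>x y. inner (\<sigma> x) (\<sigma> y) = inner x y) \<and>
     (\<forall>\<sigma>\<in>Aut. blinfun_apply \<sigma> ` h = h) \<and>
     compact Aut"

definition Pset :: "('a::euclidean_space \<Rightarrow> 'a \<Rightarrow> 'a) \<Rightarrow> ('a \<Rightarrow>\<^sub>L 'a) set \<Rightarrow> 'a set \<Rightarrow> 'a set set" where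
  "Pset br Aut h = {k. subalgebra br k \<and> (\<forall>\<sigma>\<in>Aut. blinfun_apply \<sigma> ` k \<subseteq> k) \<and> h \<subset> k}"

definition projop :: "'a::euclidean_space set \<Rightarrow> 'a \<Rightarrow>\<^sub>L 'a" where
  "projop k = Blinfun (closest_point k)"

definition trace_op :: "('a::euclidean_space \<Rightarrow>\<^sub>L 'a) \<Rightarrow> real" where
  "trace_op A = (\<Sum>b\<in>Basis. inner (A b) b)"

definition opnorm2 :: "('a::euclidean_space \<Rightarrow>\<^sub>L 'a) \<Rightarrow> real" where
  "opnorm2 A = sqrt (trace_op (A o\<^sub>L A))"

definition symmetric_op :: "('a::euclidean_space \<Rightarrow>\<^sub>L 'a) \<Rightarrow> bool" where
  "symmetric_op A \<longleftrightarrow> (\<forall>x y. inner (A x) y = inner x (A y))"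

definition nonneg_spectrum :: "('a::euclidean_space \<Rightarrow>\<^sub>L 'a) \<Rightarrow> bool" where
  "nonneg_spectrum A \<longleftrightarrow> (\<forall>c x. x \<noteq> 0 \<longrightarrow> A x = c *\<^sub>R x \<longrightarrow> 0 \<le> c)"

definition Fsub :: "('a::euclidean_space \<Rightarrow>\<^sub>L 'a) \<Rightarrow> real \<Rightarrow> 'a set" where
  "Fsub A a = span {x. x \<noteq> 0 \<and> (\<exists>c\<le>a. A x = c *\<^sub>R x)}"

definition filtering :: "('a::euclidean_space \<Rightarrow> 'a \<Rightarrow> 'a) \<Rightarrow> ('a \<Rightarrow>\<^sub>L 'a) \<Rightarrow> bool" where
  "filtering br A \<longleftrightarrow> (\<forall>a b. \<forall>x\<in>Fsub A a. \<forall>y\<in>Fsub A b. br x y \<in> Fsub A (a + b))"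

definition Fplus :: "('a::euclidean_space \<Rightarrow> 'a \<Rightarrow> 'a) \<Rightarrow> ('a \<Rightarrow>\<^sub>L 'a) set" where
  "Fplus br = {A. symmetric_op A \<and> filtering br A \<and> nonneg_spectrum A \<and> trace_op A = 1}"

definition chibar :: "'a::euclidean_space set \<Rightarrow> 'a \<Rightarrow>\<^sub>L 'a" where
  "chibar k = (1 / real (DIM('a) - dim k)) *\<^sub>R (id_blinfun - projop k)"

definition Dset :: "('a::euclidean_space \<Rightarrow> 'a \<Rightarrow> 'a) \<Rightarrow> ('a \<Rightarrow>\<^sub>L 'a) set \<Rightarrow> 'a set \<Rightarrow> ('a \<Rightarrow>\<^sub>L 'a) set" where
  "Dset br Aut k = {A. k \<noteq> UNIV \<and> symmetric_op A \<and> nonneg_spectrum A \<and> trace_op A = 1 \<and>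
      (\<forall>\<sigma>\<in>Aut. A o\<^sub>L \<sigma> = \<sigma> o\<^sub>L A) \<and>
      (\<forall>x\<in>k. A x = 0) \<and>
      (\<forall>X\<in>k. \<forall>Y. A (br X Y) = br X (A Y))}"

definition Xset :: "('a::euclidean_space \<Rightarrow> 'a \<Rightarrow> 'a) \<Rightarrow> ('a \<Rightarrow>\<^sub>L 'a) set \<Rightarrow> 'a set \<Rightarrow> ('a \<Rightarrow>\<^sub>L 'a) set" where
  "Xset br Aut k = Dset br Aut k \<inter> Fplus br"

inductive poly_op :: "(('a::euclidean_space \<Rightarrow>\<^sub>L 'a) \<Rightarrow> real) \<Rightarrow> bool" where
  poly_const: "poly_op (\<lambda>A. c)"
| poly_coord: "b \<in> Basis \<Longrightarrow> b' \<in> Basis \<Longrightarrow> poly_op (\<lambda>A. inner (A b) b')"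
| poly_add: "poly_op p \<Longrightarrow> poly_op q \<Longrightarrow> poly_op (\<lambda>A. p A + q A)"
| poly_mult: "poly_op p \<Longrightarrow> poly_op q \<Longrightarrow> poly_op (\<lambda>A. p A * q A)"

inductive semialgebraic_ops :: "('a::euclidean_space \<Rightarrow>\<^sub>L 'a) set \<Rightarrow> bool" where
  sa_eq: "poly_op p \<Longrightarrow> semialgebraic_ops {A. p A = 0}"
| sa_pos: "poly_op p \<Longrightarrow> semialgebraic_ops {A. 0 < p A}"
| sa_un: "semialgebraic_ops S \<Longrightarrow> semialgebraic_ops T \<Longrightarrow> semialgebraic_ops (S \<union> T)"
| sa_compl: "semialgebraic_ops S \<Longrightarrow> semialgebraic_ops (- S)"

(* a family of subspaces, viewed in the disjoint union of Grassmannians via orthogonal projections *)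
definition compact_semialgebraic_family :: "'a::euclidean_space set set \<Rightarrow> bool" where
  "compact_semialgebraic_family S \<longleftrightarrow> compact (projop ` S) \<and> semialgebraic_ops (projop ` S)"

definition admissible_order_ideal ::
  "('a::euclidean_space \<Rightarrow> 'a \<Rightarrow> 'a) \<Rightarrow> ('a \<Rightarrow>\<^sub>L 'a) set \<Rightarrow> 'a set \<Rightarrow> 'a set set \<Rightarrow> bool" where
  "admissible_order_ideal br Aut h I \<longleftrightarrow>
     I \<subseteq> Pset br Aut h \<and>
     (\<forall>k\<in>I. \<forall>k'\<in>Pset br Aut h. k' \<subseteq> k \<longrightarrow> k' \<in> I) \<and>
     UNIV \<notin> I \<and>
     compact_semialgebraic_family I \<and>
     compact_semialgebraic_family (Pset br Aut h - I)"

definition flags :: "'a set set \<Rightarrow> 'a set list set" where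
  "flags S = {fs. fs \<noteq> [] \<and> sorted_wrt (\<lambda>a b. b \<subset> a) fs \<and> set fs \<subseteq> S}"

definition chihull :: "'a::euclidean_space set list \<Rightarrow> ('a \<Rightarrow>\<^sub>L 'a) set" where
  "chihull fs = convex hull (chibar ` set fs)"

definition butterfly ::
  "('a::euclidean_space set \<Rightarrow> ('a \<Rightarrow>\<^sub>L 'a) set) \<Rightarrow> 'a set list \<Rightarrow> ('a \<Rightarrow>\<^sub>L 'a) set" where
  "butterfly B fs =
     (if length fs = 1 then B (hd fs)
      else if hd fs = UNIV then chihull (tl fs)
      else (\<Union>P1\<in>B (hd fs). \<Union>P2\<in>chihull (tl fs). closed_segment P1 P2))"

definition IIset :: "'a set set \<Rightarrow> 'a set set \<Rightarrow> 'a set list set" where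
  "IIset P I = {fs. fs \<in> flags P \<and> fs \<notin> flags I \<and> set (tl fs) \<subseteq> I}"

(* kappa_rel B P I A t : A \<in> B[II] and kappa(A) = t, computed from some flag in II
   containing A (the paper shows the value does not depend on the flag) *)
definition kappa_rel ::
  "('a::euclidean_space set \<Rightarrow> ('a \<Rightarrow>\<^sub>L 'a) set) \<Rightarrow> 'a set set \<Rightarrow> 'a set set \<Rightarrow> ('a \<Rightarrow>\<^sub>L 'a) \<Rightarrow> real \<Rightarrow> bool" where
  "kappa_rel B P I A t \<longleftrightarrow>
     (\<exists>fs\<in>IIset P I. A \<in> butterfly B fs \<and>
        (if hd fs = UNIV then t = 0
         else if length fs = 1 then t = 1
         else (\<exists>A1\<in>chihull (tl fs). \<exists>A2\<in>B (hd fs). A = (1 - t) *\<^sub>R A1 + t *\<^sub>R A2)))"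

end

theory Submission
  imports Defs
begin

text \<open>
  An operator A in B[\<phi>] with \<phi> \<in> II and \<kappa>(A) = t can be written
  A = t A' + \<Sum> mu_i chibar(f_i) along a flag f_1 \<supset> ... \<supset> f_m in I, with A' in B[f_1] and
  weights t, mu_1, ..., mu_m summing to 1; that t is really the coefficient of the B-part (so in
  particular 0 \<le> t \<le> 1) is detected by a linear functional that is 1 on D[f] and 0 on chibar(g)
  for the smaller g. The partial sums S_k = t + mu_1 + ... + mu_k go from S_0 = t < \<epsilon>^L \<le> \<epsilon>^m
  up to S_m = 1, so some step has S_k < \<epsilon> S_(k+1). Normalising the first k + 1 terms gives C in
  B[f_(k+1)]: the summands commute, and B is closed under convex combinations of commuting elements.
  As |Y - chibar(f)| \<le> 1 for Y in D[f] and the last summand is chibar(f_(k+1)) itself,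
  |C - chibar(f_(k+1))| \<le> S_k / S_(k+1) < \<epsilon>, and A is a convex combination of C and the
  chibar(f_i) with i > k + 1, i.e. it lies in the simplex of the truncated flag.
\<close>

section \<open>Orthogonal projections, traces and the operators chibar\<close>

lemma closest_point_subspace:
  fixes k :: "'a::euclidean_space set"
  assumes k: "subspace k"
  shows closest_point_subspace_in: "closest_point k x \<in> k"
    and closest_point_subspace_orthogonal: "z \<in> k \<Longrightarrow> inner (x - closest_point k x) z = 0"
proof -
  have cl: "closed k" "convex k" "k \<noteq> {}"
    using k closed_subspace subspace_imp_convex subspace_0 by auto
  show p: "closest_point k x \<in> k" using closest_point_in_set[OF cl(1,3)] .
  assume z: "z \<in> k"
  have "closest_point k x + z \<in> k" "closest_point k x - z \<in> k"
    using k p z by (auto intro: subspace_add subspace_diff)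
  from this[THEN closest_point_dot[OF cl(2,1)], of x]
  show "inner (x - closest_point k x) z = 0" by simp
qed

lemma closest_point_subspace_unique:
  fixes k :: "'a::euclidean_space set"
  assumes k: "subspace k" and y: "y \<in> k" and orth: "\<And>z. z \<in> k \<Longrightarrow> inner (x - y) z = 0"
  shows "closest_point k x = y"
proof -
  define p where "p = closest_point k x"
  have pk: "p - y \<in> k" unfolding p_def using k y closest_point_subspace_in subspace_diff by blast
  have "inner (p - y) (p - y) = inner (x - y) (p - y) - inner (x - p) (p - y)"
    by (simp add: inner_diff_left)
  also have "\<dots> = 0"
    using orth[OF pk] closest_point_subspace_orthogonal[OF k pk, of x] by (simp add: p_def)
  finally show ?thesis unfolding p_def by simp
qed

lemma linear_closest_point_subspace:
  fixes k :: "'a::euclidean_space set"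
  assumes k: "subspace k"
  shows "linear (closest_point k)"
proof (rule linearI)
  note in_k = closest_point_subspace_in[OF k] and orth = closest_point_subspace_orthogonal[OF k]
  fix x y :: 'a and c :: real
  show "closest_point k (x + y) = closest_point k x + closest_point k y"
  proof (rule closest_point_subspace_unique[OF k])
    show "closest_point k x + closest_point k y \<in> k" using in_k k subspace_add by blast
    fix z assume "z \<in> k"
    thus "inner (x + y - (closest_point k x + closest_point k y)) z = 0"
      using orth[of z x] orth[of z y] by (simp add: algebra_simps inner_diff_left inner_add_left)
  qed
  show "closest_point k (c *\<^sub>R x) = c *\<^sub>R closest_point k x"
  proof (rule closest_point_subspace_unique[OF k])
    show "c *\<^sub>R closest_point k x \<in> k" using in_k k subspace_scale by blast
    fix z assume "z \<in> k"
    thus "inner (c *\<^sub>R x - c *\<^sub>R closest_point k x) z = 0"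
      using orth[of z x] by (simp flip: scaleR_diff_right)
  qed
qed

lemma projop_apply: "subspace k \<Longrightarrow> blinfun_apply (projop k) = closest_point k"
  unfolding projop_def
  by (intro bounded_linear_Blinfun_apply linear_conv_bounded_linear[THEN iffD1]
      linear_closest_point_subspace)

lemma projop_in: "subspace k \<Longrightarrow> projop k x \<in> k"
  by (simp add: projop_apply closest_point_subspace_in)

lemma projop_orthogonal: "subspace k \<Longrightarrow> z \<in> k \<Longrightarrow> inner (x - projop k x) z = 0"
  by (simp add: projop_apply closest_point_subspace_orthogonal)

lemma projop_unique:
  "subspace k \<Longrightarrow> y \<in> k \<Longrightarrow> (\<And>z. z \<in> k \<Longrightarrow> inner (x - y) z = 0) \<Longrightarrow> projop k x = y"
  by (simp add: projop_apply closest_point_subspace_unique)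

lemma projop_self: "subspace k \<Longrightarrow> x \<in> k \<Longrightarrow> projop k x = x"
  by (rule projop_unique) auto

lemma projop_eq_0: "subspace k \<Longrightarrow> (\<And>z. z \<in> k \<Longrightarrow> inner x z = 0) \<Longrightarrow> projop k x = 0"
  by (rule projop_unique) (auto simp: subspace_0)

lemma projop_idem: "subspace k \<Longrightarrow> projop k (projop k x) = projop k x"
  by (simp add: projop_in projop_self)

lemma inner_projop_commute:
  assumes k: "subspace k"
  shows "inner (projop k x) y = inner x (projop k y)"
proof -
  have "inner (x - projop k x) (projop k y) = 0" "inner (y - projop k y) (projop k x) = 0"
    using k projop_in projop_orthogonal by blast+
  thus ?thesis by (simp add: inner_diff_left inner_diff_right inner_commute)
qed

lemma projop_projop_subset:
  assumes j: "subspace j" and k: "subspace k" and jk: "j \<subseteq> k"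
  shows "projop j (projop k x) = projop j x"
proof (rule projop_unique[OF j])
  show "projop j x \<in> j" using j projop_in by blast
  fix z assume z: "z \<in> j"
  have "inner (projop k x - projop j x) z = inner (x - projop j x) z - inner (x - projop k x) z"
    by (simp add: inner_diff_left)
  thus "inner (projop k x - projop j x) z = 0"
    using projop_orthogonal[OF j z] projop_orthogonal[OF k, of z x] z jk by auto
qed

lemma projop_projop_supset: "subspace j \<Longrightarrow> subspace k \<Longrightarrow> j \<subseteq> k \<Longrightarrow> projop k (projop j x) = projop j x"
  using projop_self projop_in by blast

lemma projop_orthonormal_basis:
  fixes k :: "'a::euclidean_space set"
  assumes k: "subspace k" and Bk: "Bs \<subseteq> k" and orth: "pairwise orthogonal Bs"
    and unit: "\<And>x. x \<in> Bs \<Longrightarrow> norm x = 1" and span: "span Bs = k" and fin: "finite Bs"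
  shows "projop k x = (\<Sum>e\<in>Bs. inner x e *\<^sub>R e)"
proof (rule projop_unique[OF k])
  show "(\<Sum>e\<in>Bs. inner x e *\<^sub>R e) \<in> k"
    using Bk k by (auto intro!: subspace_sum subspace_scale)
  have basis: "inner (x - (\<Sum>e\<in>Bs. inner x e *\<^sub>R e)) e' = 0" if e': "e' \<in> Bs" for e'
  proof -
    have "(\<Sum>e\<in>Bs - {e'}. inner x e * inner e e') = 0"
      using orth e' by (intro sum.neutral) (auto simp: pairwise_def orthogonal_def)
    moreover have "inner e' e' = 1" using unit[OF e'] norm_eq_1 by blast
    ultimately have "(\<Sum>e\<in>Bs. inner x e * inner e e') = inner x e'"
      using sum.remove[OF fin e', of "\<lambda>e. inner x e * inner e e'"] by simp
    thus ?thesis by (simp add: inner_diff_left inner_sum_left)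
  qed
  fix z assume "z \<in> k"
  thus "inner (x - (\<Sum>e\<in>Bs. inner x e *\<^sub>R e)) z = 0"
    using orthogonal_to_span[of z Bs] basis span by (auto simp: orthogonal_def)
qed

lemma trace_op_diff: "trace_op (X - Y) = trace_op X - trace_op Y"
  by (simp add: trace_op_def blinfun.diff_left inner_diff_left sum_subtractf)

lemma trace_op_scaleR: "trace_op (c *\<^sub>R X) = c * trace_op X"
  by (simp add: trace_op_def blinfun.scaleR_left sum_distrib_left)

lemma trace_op_sum: "trace_op (\<Sum>i\<in>S. f i) = (\<Sum>i\<in>S. trace_op (f i))"
  unfolding trace_op_def blinfun.sum_left inner_sum_left by (rule sum.swap)

lemma trace_op_id: "trace_op (id_blinfun :: 'a::euclidean_space \<Rightarrow>\<^sub>L 'a) = real DIM('a)"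
  by (simp add: trace_op_def)

lemma trace_op_projop:
  fixes k :: "'a::euclidean_space set"
  assumes k: "subspace k"
  shows "trace_op (projop k) = real (dim k)"
proof -
  obtain Bs where Bk: "Bs \<subseteq> k" and orth: "pairwise orthogonal Bs"
    and unit: "\<And>x. x \<in> Bs \<Longrightarrow> norm x = 1" and ind: "independent Bs" and card: "card Bs = dim k"
    and span: "span Bs = k"
    using orthonormal_basis_subspace[OF k] by blast
  have fin: "finite Bs" using ind independent_imp_finite by blast
  note proj = projop_orthonormal_basis[OF k Bk orth unit span fin]
  have "trace_op (projop k) = (\<Sum>b\<in>Basis. \<Sum>e\<in>Bs. inner b e * inner e b)"
    by (simp add: trace_op_def proj inner_sum_left)
  also have "\<dots> = (\<Sum>e\<in>Bs. \<Sum>b\<in>Basis. inner e b * inner e b)"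
    by (subst sum.swap) (simp add: inner_commute)
  also have "\<dots> = (\<Sum>e\<in>Bs. 1)"
    using unit by (intro sum.cong) (auto simp flip: euclidean_inner simp: norm_eq_1)
  finally show ?thesis using card by simp
qed

lemma dim_less_DIM:
  fixes k :: "'a::euclidean_space set"
  assumes "subspace k" "k \<noteq> UNIV"
  shows "dim k < DIM('a)"
proof -
  have "span k = k" using assms(1) by (simp add: span_eq_iff)
  hence "dim k \<noteq> DIM('a)" using dim_eq_full[of k] assms(2) by metis
  thus ?thesis using dim_subset_UNIV[of k] by simp
qed

lemma symmetric_op_add: "symmetric_op X \<Longrightarrow> symmetric_op Y \<Longrightarrow> symmetric_op (X + Y)"
  unfolding symmetric_op_def by (simp add: blinfun.add_left inner_add_left inner_add_right)

lemma symmetric_op_scaleR: "symmetric_op X \<Longrightarrow> symmetric_op (c *\<^sub>R X)"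
  unfolding symmetric_op_def by (simp add: blinfun.scaleR_left)

lemma symmetric_op_diff: "symmetric_op X \<Longrightarrow> symmetric_op Y \<Longrightarrow> symmetric_op (X - Y)"
  unfolding symmetric_op_def by (simp add: blinfun.diff_left inner_diff_left inner_diff_right)

lemma symmetric_op_sum: "(\<And>i. i \<in> S \<Longrightarrow> symmetric_op (Y i)) \<Longrightarrow> symmetric_op (\<Sum>i\<in>S. Y i)"
  by (induction S rule: infinite_finite_induct)
    (auto simp: symmetric_op_add symmetric_op_def[of 0])

lemma chibar_apply:
  "chibar k x = (1 / real (DIM('a) - dim k)) *\<^sub>R (x - projop k x)" for k :: "'a::euclidean_space set"
  by (simp add: chibar_def blinfun.scaleR_left blinfun.diff_left)

lemma chibar_coeff_pos:
  fixes k :: "'a::euclidean_space set"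
  shows "subspace k \<Longrightarrow> k \<noteq> UNIV \<Longrightarrow> 0 < 1 / real (DIM('a) - dim k)"
  using dim_less_DIM by simp

lemma symmetric_op_chibar: "subspace k \<Longrightarrow> symmetric_op (chibar k)"
  unfolding symmetric_op_def chibar_apply
  by (simp add: inner_diff_left inner_diff_right inner_projop_commute)

lemma trace_op_chibar:
  fixes k :: "'a::euclidean_space set"
  assumes "subspace k" "k \<noteq> UNIV"
  shows "trace_op (chibar k) = 1"
  using dim_less_DIM[OF assms]
  by (simp add: chibar_def trace_op_scaleR trace_op_diff trace_op_id trace_op_projop assms of_nat_diff)

lemma chibar_eq_0: "subspace k \<Longrightarrow> x \<in> k \<Longrightarrow> chibar k x = 0"
  by (simp add: chibar_apply projop_self)

lemma projop_chibar: "subspace k \<Longrightarrow> projop k (chibar k x) = 0"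
  by (simp add: chibar_apply blinfun.scaleR_right blinfun.diff_right projop_idem)

lemma inner_chibar_nonneg:
  fixes k :: "'a::euclidean_space set"
  assumes k: "subspace k" "k \<noteq> UNIV"
  shows "0 \<le> inner (chibar k x) x"
proof -
  have "inner (x - projop k x) (projop k x) = 0" using projop_orthogonal projop_in k by blast
  hence "inner (x - projop k x) x = inner (x - projop k x) (x - projop k x)"
    by (simp add: inner_diff_right)
  thus ?thesis unfolding chibar_apply using chibar_coeff_pos[OF k] by simp
qed

lemma chibar_commute:
  fixes g g' :: "'a::euclidean_space set"
  assumes "subspace g" "subspace g'" "g \<subseteq> g' \<or> g' \<subseteq> g"
  shows "chibar g (chibar g' x) = chibar g' (chibar g x)"
proof -
  have "projop g (projop g' x) = projop g' (projop g x)"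
    using assms projop_projop_subset projop_projop_supset by metis
  thus ?thesis unfolding chibar_apply
    by (simp add: blinfun.scaleR_right blinfun.diff_right algebra_simps)
qed

section \<open>Spectral theory of symmetric operators\<close>

lemma quadratic_nonpos_imp_linear_coeff_0:
  fixes a b :: real
  assumes "\<And>s. 2 * s * a + s\<^sup>2 * b \<le> 0"
  shows "a = 0"
proof -
  define d where "d = \<bar>b\<bar> + 1"
  have d: "0 < d" "0 < 2 * d + b" unfolding d_def by (simp_all add: abs_if)
  have "2 * (a / d) * a + (a / d)\<^sup>2 * b = a\<^sup>2 * (2 * d + b) / d\<^sup>2"
    using d by (simp add: field_simps power2_eq_square)
  hence "a\<^sup>2 * (2 * d + b) \<le> 0" using assms[of "a / d"] d by (simp add: divide_le_0_iff)
  thus ?thesis using d by (simp add: mult_le_0_iff)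
qed

lemma max_quadratic_form_eigenvector:
  fixes X :: "'a::euclidean_space \<Rightarrow>\<^sub>L 'a"
  assumes sym: "symmetric_op X" and W: "subspace W" and inv: "\<And>v. v \<in> W \<Longrightarrow> X v \<in> W"
    and w: "w \<in> W" "inner w w = 1"
    and max: "\<And>v. v \<in> W \<Longrightarrow> inner (X v) v \<le> inner (X w) w * inner v v"
  shows "X w = inner (X w) w *\<^sub>R w"
proof -
  define M where "M = inner (X w) w"
  have orth: "inner (X w) h = 0" if h: "h \<in> W" "inner h w = 0" for h
  proof (rule quadratic_nonpos_imp_linear_coeff_0)
    fix s :: real
    have "w + s *\<^sub>R h \<in> W" using W w h by (simp add: subspace_add subspace_scale)
    from max[OF this] have "inner (X (w + s *\<^sub>R h)) (w + s *\<^sub>R h) \<le> M * inner (w + s *\<^sub>R h) (w + s *\<^sub>R h)"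
      unfolding M_def .
    moreover have "inner (X h) w = inner (X w) h"
      using sym unfolding symmetric_op_def by (metis inner_commute)
    ultimately show "2 * s * inner (X w) h + s\<^sup>2 * (inner (X h) h - M * inner h h) \<le> 0"
      using w h unfolding M_def
      by (simp add: blinfun.add_right blinfun.scaleR_right inner_add_left inner_add_right
          inner_commute power2_eq_square algebra_simps)
  qed
  define h where "h = X w - M *\<^sub>R w"
  have "h \<in> W" unfolding h_def using inv w W by (simp add: subspace_diff subspace_scale)
  moreover have hw: "inner h w = 0" unfolding h_def M_def using w by (simp add: inner_diff_left)
  ultimately have "inner (X w) h = 0" by (rule orth)
  hence "inner h h = 0" using hw unfolding h_def by (simp add: inner_diff_left inner_commute)
  thus ?thesis unfolding h_def M_def by simp
qed

lemma exists_max_quadratic_form: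
  fixes X :: "'a::euclidean_space \<Rightarrow>\<^sub>L 'a"
  assumes W: "subspace W" and ne: "W \<noteq> {0}"
  obtains w where "w \<in> W" "inner w w = 1" "\<And>v. v \<in> W \<Longrightarrow> inner (X v) v \<le> inner (X w) w * inner v v"
proof -
  define S where "S = W \<inter> sphere 0 1"
  have S: "compact S" unfolding S_def using closed_subspace[OF W] by (simp add: closed_Int_compact)
  obtain v0 where "v0 \<in> W" "v0 \<noteq> 0" using ne W subspace_0 by blast
  hence "v0 /\<^sub>R norm v0 \<in> S" unfolding S_def using W by (simp add: subspace_scale)
  hence "S \<noteq> {}" by blast
  moreover have "continuous_on S (\<lambda>v. inner (X v) v)" by (intro continuous_intros)
  ultimately obtain w where wS: "w \<in> S" and wmax: "\<And>v. v \<in> S \<Longrightarrow> inner (X v) v \<le> inner (X w) w"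
    using continuous_attains_sup[OF S, of "\<lambda>v. inner (X v) v"] by blast
  show ?thesis
  proof (rule that)
    show "w \<in> W" "inner w w = 1" using wS unfolding S_def by (auto simp: norm_eq_1)
    fix v assume vW: "v \<in> W"
    show "inner (X v) v \<le> inner (X w) w * inner v v"
    proof (cases "v = 0")
      case False
      have "v /\<^sub>R norm v \<in> S" unfolding S_def using vW W False by (simp add: subspace_scale)
      from wmax[OF this] have "inner (X v) v / (norm v)\<^sup>2 \<le> inner (X w) w"
        by (simp add: blinfun.scaleR_right power2_eq_square divide_inverse ac_simps)
      thus ?thesis using False by (simp add: divide_le_eq power2_norm_eq_inner)
    qed simp
  qed
qed

lemma exists_eigenvector:
  fixes X :: "'a::euclidean_space \<Rightarrow>\<^sub>L 'a"
  assumes "symmetric_op X" "subspace W" "\<And>v. v \<in> W \<Longrightarrow> X v \<in> W" "W \<noteq> {0}"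
  obtains w c where "w \<in> W" "inner w w = 1" "X w = c *\<^sub>R w"
  using exists_max_quadratic_form[OF assms(2,4), of X] max_quadratic_form_eigenvector[OF assms(1-3)]
  by metis

lemma nonneg_spectrum_iff_psd:
  fixes X :: "'a::euclidean_space \<Rightarrow>\<^sub>L 'a"
  assumes sym: "symmetric_op X"
  shows "nonneg_spectrum X \<longleftrightarrow> (\<forall>x. 0 \<le> inner (X x) x)"
proof
  assume nn: "nonneg_spectrum X"
  have "(UNIV :: 'a set) \<noteq> {0}"
    using nonzero_Basis nonempty_Basis by (metis UNIV_I ex_in_conv singletonD)
  then obtain w where w: "inner w w = 1" and max: "\<And>v. inner (- X v) v \<le> inner (- X w) w * inner v v"
    using exists_max_quadratic_form[OF subspace_UNIV, of "- X"] by (auto simp: blinfun.minus_left)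
  have "symmetric_op (- X)" using sym unfolding symmetric_op_def by (simp add: blinfun.minus_left)
  from max_quadratic_form_eigenvector[OF this subspace_UNIV _ _ w] max
  have "X w = (- inner (- X w) w) *\<^sub>R w" by (simp add: blinfun.minus_left)
  moreover have "w \<noteq> 0" using w by auto
  ultimately have "0 \<le> - inner (- X w) w" using nn unfolding nonneg_spectrum_def by blast
  show "\<forall>x. 0 \<le> inner (X x) x"
  proof
    fix x
    have "inner (- X x) x \<le> inner (- X w) w * inner x x" by (rule max)
    also have "\<dots> \<le> 0" using \<open>0 \<le> - inner (- X w) w\<close> by (simp add: mult_nonpos_nonneg)
    finally show "0 \<le> inner (X x) x" by simp
  qed
next
  assume psd: "\<forall>x. 0 \<le> inner (X x) x"
  show "nonneg_spectrum X" unfolding nonneg_spectrum_def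
  proof (intro allI impI)
    fix c x assume "x \<noteq> (0::'a)" and eig: "X x = c *\<^sub>R x"
    hence "0 < inner x x" by simp
    moreover have "0 \<le> c * inner x x" using psd[rule_format, of x] eig by simp
    ultimately show "0 \<le> c" using mult_le_cancel_right_pos[of "inner x x" 0 c] by simp
  qed
qed

definition eigenvectors_in :: "('a::euclidean_space \<Rightarrow>\<^sub>L 'a) \<Rightarrow> 'a set \<Rightarrow> 'a set" where
  "eigenvectors_in X W = {x \<in> W. \<exists>c. X x = c *\<^sub>R x}"

lemma orthogonal_complement_eigenvector_invariant:
  fixes X :: "'a::euclidean_space \<Rightarrow>\<^sub>L 'a"
  assumes sym: "symmetric_op X" and W: "subspace W" and inv: "\<And>v. v \<in> W \<Longrightarrow> X v \<in> W"
    and w: "X w = c *\<^sub>R w"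
  shows "subspace {v \<in> W. inner v w = 0}"
    and "v \<in> {v \<in> W. inner v w = 0} \<Longrightarrow> X v \<in> {v \<in> W. inner v w = 0}"
proof -
  show "subspace {v \<in> W. inner v w = 0}"
    unfolding subspace_def using W by (auto simp: subspace_0 subspace_add subspace_scale inner_add_left)
  assume v: "v \<in> {v \<in> W. inner v w = 0}"
  have "inner (X v) w = c * inner v w" using sym w unfolding symmetric_op_def by simp
  thus "X v \<in> {v \<in> W. inner v w = 0}" using v inv by auto
qed

lemma invariant_subspace_in_span_eigenvectors:
  fixes X :: "'a::euclidean_space \<Rightarrow>\<^sub>L 'a"
  assumes sym: "symmetric_op X"
  shows "subspace W \<Longrightarrow> (\<And>v. v \<in> W \<Longrightarrow> X v \<in> W) \<Longrightarrow> W \<subseteq> span (eigenvectors_in X W)"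
proof (induction "dim W" arbitrary: W rule: less_induct)
  case less
  show ?case
  proof (cases "W = {0}")
    case True thus ?thesis by (simp add: span_0)
  next
    case False
    obtain w c where w: "w \<in> W" "inner w w = 1" "X w = c *\<^sub>R w"
      using exists_eigenvector[OF sym less.prems False] by blast
    define W' where "W' = {v \<in> W. inner v w = 0}"
    note sW' = orthogonal_complement_eigenvector_invariant(1)[OF sym less.prems w(3), folded W'_def]
      and inv = orthogonal_complement_eigenvector_invariant(2)[OF sym less.prems w(3), folded W'_def]
    have "w \<notin> W'" using w unfolding W'_def by simp
    hence "W' \<subset> W" using w unfolding W'_def by blast
    moreover have "span W' = W'" "span W = W" using sW' less.prems(1) by (simp_all add: span_eq_iff)
    ultimately have "dim W' < dim W" using dim_psubset[of W' W] by (simp only:)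
    from less.hyps[OF this sW' inv]
    have IH: "W' \<subseteq> span (eigenvectors_in X W)"
      by (rule order_trans) (auto intro!: span_mono simp: eigenvectors_in_def W'_def)
    have wE: "w \<in> span (eigenvectors_in X W)" using w by (auto intro: span_base simp: eigenvectors_in_def)
    show ?thesis
    proof
      fix v assume v: "v \<in> W"
      have "v - inner v w *\<^sub>R w \<in> W'"
        unfolding W'_def using v w less.prems(1) by (simp add: subspace_diff subspace_scale inner_diff_left)
      hence "(v - inner v w *\<^sub>R w) + inner v w *\<^sub>R w \<in> span (eigenvectors_in X W)"
        using IH wE by (blast intro: span_add span_mul)
      thus "v \<in> span (eigenvectors_in X W)" by simp
    qed
  qed
qed

lemma inner_eigenvectors_distinct:
  fixes X :: "'a::euclidean_space \<Rightarrow>\<^sub>L 'a"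
  assumes "symmetric_op X" "X u = a *\<^sub>R u" "X v = b *\<^sub>R v" "a \<noteq> b"
  shows "inner u v = 0"
proof -
  have "inner (X u) v = inner u (X v)" using assms(1) unfolding symmetric_op_def by blast
  thus ?thesis using assms(2-4) by simp
qed

lemma inner_eq_0_span:
  fixes z :: "'a::euclidean_space"
  assumes "x \<in> span S" "\<And>y. y \<in> S \<Longrightarrow> inner z y = 0"
  shows "inner z x = 0"
  using orthogonal_to_span[of x S z] assms by (auto simp: orthogonal_def)

section \<open>Filtering operators\<close>

lemma subspace_Fsub: "subspace (Fsub X a)"
  unfolding Fsub_def by (rule subspace_span)

lemma Fsub_mono: "a \<le> b \<Longrightarrow> Fsub X a \<subseteq> Fsub X b"
  unfolding Fsub_def by (rule span_mono) auto

lemma Fsub_eigenvector: "blinfun_apply X x = c *\<^sub>R x \<Longrightarrow> c \<le> a \<Longrightarrow> x \<in> Fsub X a"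
  unfolding Fsub_def by (cases "x = 0") (auto simp: span_0 intro!: span_base)

lemma Fsub_imp_orthogonal:
  fixes X :: "'a::euclidean_space \<Rightarrow>\<^sub>L 'a"
  assumes sym: "symmetric_op X" and z: "z \<in> Fsub X p" and w: "X w = c *\<^sub>R w" "p < c"
  shows "inner z w = 0"
proof -
  have "inner w z = 0"
    using z unfolding Fsub_def
  proof (rule inner_eq_0_span)
    fix y assume "y \<in> {x. x \<noteq> 0 \<and> (\<exists>c\<le>p. X x = c *\<^sub>R x)}"
    thus "inner w y = 0" using inner_eigenvectors_distinct[OF sym w(1)] w(2) by fastforce
  qed
  thus ?thesis by (simp add: inner_commute)
qed

lemma orthogonal_imp_Fsub:
  fixes X :: "'a::euclidean_space \<Rightarrow>\<^sub>L 'a"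
  assumes sym: "symmetric_op X" and orth: "\<And>w c. X w = c *\<^sub>R w \<Longrightarrow> p < c \<Longrightarrow> inner z w = 0"
  shows "z \<in> Fsub X p"
proof -
  define low where "low = {x. \<exists>c\<le>p. X x = c *\<^sub>R x}"
  define high where "high = {x. \<exists>c>p. X x = c *\<^sub>R x}"
  have "UNIV \<subseteq> span (eigenvectors_in X UNIV)"
    by (rule invariant_subspace_in_span_eigenvectors[OF sym subspace_UNIV]) simp
  also have "eigenvectors_in X UNIV \<subseteq> low \<union> high"
  proof
    fix x assume "x \<in> eigenvectors_in X UNIV"
    then obtain c where "X x = c *\<^sub>R x" by (auto simp: eigenvectors_in_def)
    thus "x \<in> low \<union> high" unfolding low_def high_def by (cases "c \<le> p") auto
  qed
  hence "span (eigenvectors_in X UNIV) \<subseteq> span (low \<union> high)" by (rule span_mono)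
  finally obtain z1 z2 where z: "z1 \<in> span low" "z2 \<in> span high" "z = z1 + z2"
    unfolding span_Un by blast
  have "inner z z2 = 0" using z(2) by (rule inner_eq_0_span) (use orth in \<open>auto simp: high_def\<close>)
  moreover have "inner z2 z1 = 0"
  proof (rule inner_eq_0_span[OF z(1)])
    fix y assume "y \<in> low"
    then obtain c' where "c' \<le> p" and "X y = c' *\<^sub>R y" unfolding low_def by blast
    have "inner y z2 = 0"
    proof (rule inner_eq_0_span[OF z(2)])
      fix x assume "x \<in> high"
      then obtain c where "p < c" and x: "X x = c *\<^sub>R x" unfolding high_def by blast
      hence "c' \<noteq> c" using \<open>c' \<le> p\<close> by simp
      thus "inner y x = 0" using inner_eigenvectors_distinct[OF sym \<open>X y = c' *\<^sub>R y\<close> x] by blast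
    qed
    thus "inner z2 y = 0" by (simp add: inner_commute)
  qed
  ultimately have "inner z2 z2 = 0" using z(3) by (simp add: inner_add_left inner_add_right inner_commute)
  moreover have "span low \<subseteq> Fsub X p"
    using subspace_Fsub unfolding low_def by (intro span_minimal) (auto intro: Fsub_eigenvector)
  ultimately show ?thesis using z by auto
qed

lemma Fsub_iff_orthogonal:
  "symmetric_op (X :: 'a::euclidean_space \<Rightarrow>\<^sub>L 'a) \<Longrightarrow> z \<in> Fsub X p \<longleftrightarrow> (\<forall>w c. X w = c *\<^sub>R w \<and> p < c \<longrightarrow> inner z w = 0)"
  using Fsub_imp_orthogonal orthogonal_imp_Fsub by blast

lemma bilinear_span_in_subspace:
  assumes b: "bilinear br" and F: "subspace F" and x: "x \<in> span S" and y: "y \<in> span T"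
    and ST: "\<And>u v. u \<in> S \<Longrightarrow> v \<in> T \<Longrightarrow> br u v \<in> F"
  shows "br x y \<in> F"
proof -
  have lin: "linear (br u)" "linear (\<lambda>x. br x y)" for u using b unfolding bilinear_def by auto
  have "br u y \<in> F" if u: "u \<in> S" for u
  proof -
    have "subspace {y. br u y \<in> F}"
      using linear_subspace_vimage[OF lin(1) F] by (simp add: vimage_def)
    hence "span T \<subseteq> {y. br u y \<in> F}" using ST u by (intro span_minimal) auto
    thus ?thesis using y by blast
  qed
  moreover have "subspace {x. br x y \<in> F}"
    using linear_subspace_vimage[OF lin(2) F] by (simp add: vimage_def)
  ultimately have "span S \<subseteq> {x. br x y \<in> F}" by (intro span_minimal) auto
  thus ?thesis using x by blast
qed

lemma Fsub_zero: "Fsub (0 :: 'a::euclidean_space \<Rightarrow>\<^sub>L 'a) a = (if a < 0 then {0} else UNIV)"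
proof (cases "a < 0")
  case True
  hence "{x :: 'a. x \<noteq> 0 \<and> (\<exists>c\<le>a. (0 :: 'a \<Rightarrow>\<^sub>L 'a) x = c *\<^sub>R x)} = {}" by auto
  with True show ?thesis unfolding Fsub_def by (simp only: span_empty if_True)
next
  case False
  hence "x \<in> Fsub 0 a" for x :: 'a by (intro Fsub_eigenvector[of _ _ 0]) auto
  thus ?thesis using False by auto
qed

lemma filtering_zero: "bilinear br \<Longrightarrow> filtering br 0"
  unfolding filtering_def Fsub_zero
  by (auto simp: bilinear_lzero bilinear_rzero)

lemma Fsub_scaleR:
  fixes X :: "'a::euclidean_space \<Rightarrow>\<^sub>L 'a"
  assumes c: "0 < c"
  shows "Fsub (c *\<^sub>R X) a = Fsub X (a / c)"
proof -
  have "(\<exists>d\<le>a. c *\<^sub>R X x = d *\<^sub>R x) \<longleftrightarrow> (\<exists>d\<le>a / c. X x = d *\<^sub>R x)" for x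
  proof
    assume "\<exists>d\<le>a. c *\<^sub>R X x = d *\<^sub>R x"
    then obtain d where "d \<le> a" and eq: "c *\<^sub>R X x = d *\<^sub>R x" by blast
    have "X x = (1 / c) *\<^sub>R (c *\<^sub>R X x)" using c by simp
    hence "X x = (d / c) *\<^sub>R x" unfolding eq by simp
    moreover have "d / c \<le> a / c" using \<open>d \<le> a\<close> c by (simp add: divide_right_mono)
    ultimately show "\<exists>d\<le>a / c. X x = d *\<^sub>R x" by blast
  next
    assume "\<exists>d\<le>a / c. X x = d *\<^sub>R x"
    then obtain d where "d \<le> a / c" "X x = d *\<^sub>R x" by blast
    hence "c * d \<le> a" "c *\<^sub>R X x = (c * d) *\<^sub>R x" using c by (auto simp: field_simps)
    thus "\<exists>d\<le>a. c *\<^sub>R X x = d *\<^sub>R x" by blast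
  qed
  thus ?thesis unfolding Fsub_def by (simp add: blinfun.scaleR_left)
qed

lemma filtering_scaleR:
  assumes b: "bilinear br" and X: "filtering br X" and c: "0 \<le> c"
  shows "filtering br (c *\<^sub>R X)"
proof (cases "c = 0")
  case True thus ?thesis using filtering_zero[OF b] by simp
next
  case False
  hence "0 < c" using c by simp
  thus ?thesis using X unfolding filtering_def Fsub_scaleR[OF \<open>0 < c\<close>]
    by (simp add: add_divide_distrib)
qed

definition joint_eigenvectors ::
  "('a::euclidean_space \<Rightarrow>\<^sub>L 'a) \<Rightarrow> ('a \<Rightarrow>\<^sub>L 'a) \<Rightarrow> real \<Rightarrow> 'a set" where
  "joint_eigenvectors X Y l = {v. \<exists>\<alpha> \<beta>. X v = \<alpha> *\<^sub>R v \<and> Y v = \<beta> *\<^sub>R v \<and> \<alpha> + \<beta> = l}"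

lemma eigenvector_add_in_span_joint_eigenvectors:
  fixes X Y :: "'a::euclidean_space \<Rightarrow>\<^sub>L 'a"
  assumes X: "symmetric_op X" and comm: "\<And>x. X (Y x) = Y (X x)" and u: "(X + Y) u = l *\<^sub>R u"
  shows "u \<in> span (joint_eigenvectors X Y l)"
proof -
  define W where "W = {v. (X + Y) v = l *\<^sub>R v}"
  have W: "subspace W" unfolding subspace_def W_def
    by (auto simp: blinfun.add_right blinfun.scaleR_right scaleR_add_right mult.commute)
  have "X v \<in> W" if "v \<in> W" for v
  proof -
    have "(X + Y) (X v) = X ((X + Y) v)" by (simp add: blinfun.add_left blinfun.add_right comm)
    thus ?thesis using that unfolding W_def by (simp add: blinfun.scaleR_right)
  qed
  hence "W \<subseteq> span (eigenvectors_in X W)" by (rule invariant_subspace_in_span_eigenvectors[OF X W])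
  moreover have "eigenvectors_in X W \<subseteq> joint_eigenvectors X Y l"
  proof
    fix v assume "v \<in> eigenvectors_in X W"
    then obtain \<alpha> where v: "X v + Y v = l *\<^sub>R v" "X v = \<alpha> *\<^sub>R v"
      unfolding eigenvectors_in_def W_def by (auto simp: blinfun.add_left)
    hence "Y v = (l - \<alpha>) *\<^sub>R v" by (simp add: algebra_simps)
    thus "v \<in> joint_eigenvectors X Y l" unfolding joint_eigenvectors_def using v(2) by force
  qed
  ultimately show ?thesis using u span_mono unfolding W_def by blast
qed

lemma Fsub_add:
  fixes X Y :: "'a::euclidean_space \<Rightarrow>\<^sub>L 'a"
  assumes X: "symmetric_op X" and Y: "symmetric_op Y" and comm: "\<And>x. X (Y x) = Y (X x)"
    and zX: "z \<in> Fsub X p" and zY: "z \<in> Fsub Y q"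
  shows "z \<in> Fsub (X + Y) (p + q)"
  unfolding Fsub_iff_orthogonal[OF symmetric_op_add[OF X Y]]
proof (intro allI impI, elim conjE)
  fix w c assume w: "(X + Y) w = c *\<^sub>R w" and c: "p + q < c"
  show "inner z w = 0"
  proof (rule inner_eq_0_span[OF eigenvector_add_in_span_joint_eigenvectors[OF X comm w]])
    fix v assume "v \<in> joint_eigenvectors X Y c"
    then obtain \<alpha> \<beta> where v: "X v = \<alpha> *\<^sub>R v" "Y v = \<beta> *\<^sub>R v" "\<alpha> + \<beta> = c"
      unfolding joint_eigenvectors_def by blast
    hence "p < \<alpha> \<or> q < \<beta>" using c by linarith
    thus "inner z v = 0"
      using zX zY v(1,2) unfolding Fsub_iff_orthogonal[OF X] Fsub_iff_orthogonal[OF Y] by blast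
  qed
qed

lemma Fsub_add_subset_span_joint_eigenvectors:
  fixes X Y :: "'a::euclidean_space \<Rightarrow>\<^sub>L 'a"
  assumes "symmetric_op X" and "\<And>x. X (Y x) = Y (X x)"
  shows "Fsub (X + Y) a \<subseteq> span (\<Union>l\<in>{..a}. joint_eigenvectors X Y l)"
  unfolding Fsub_def
proof (intro span_minimal subsetI)
  fix u assume "u \<in> {x. x \<noteq> 0 \<and> (\<exists>c\<le>a. (X + Y) x = c *\<^sub>R x)}"
  then obtain l where "l \<le> a" and u: "(X + Y) u = l *\<^sub>R u" by auto
  hence "span (joint_eigenvectors X Y l) \<subseteq> span (\<Union>l\<in>{..a}. joint_eigenvectors X Y l)"
    by (intro span_mono) auto
  thus "u \<in> span (\<Union>l\<in>{..a}. joint_eigenvectors X Y l)"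
    using eigenvector_add_in_span_joint_eigenvectors[OF assms u] by blast
qed (rule subspace_span)

lemma filtering_add:
  fixes X Y :: "'a::euclidean_space \<Rightarrow>\<^sub>L 'a"
  assumes b: "bilinear br" and X: "symmetric_op X" and Y: "symmetric_op Y"
    and comm: "\<And>x. X (Y x) = Y (X x)" and fX: "filtering br X" and fY: "filtering br Y"
  shows "filtering br (X + Y)"
  unfolding filtering_def
proof (intro allI ballI)
  note span_joint = Fsub_add_subset_span_joint_eigenvectors[OF X comm]
  fix a a' x y assume x: "x \<in> Fsub (X + Y) a" and y: "y \<in> Fsub (X + Y) a'"
  show "br x y \<in> Fsub (X + Y) (a + a')"
  proof (rule bilinear_span_in_subspace[OF b subspace_Fsub])
    show "x \<in> span (\<Union>l\<in>{..a}. joint_eigenvectors X Y l)" using x span_joint by blast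
    show "y \<in> span (\<Union>l\<in>{..a'}. joint_eigenvectors X Y l)" using y span_joint by blast
    fix u v assume "u \<in> (\<Union>l\<in>{..a}. joint_eigenvectors X Y l)" "v \<in> (\<Union>l\<in>{..a'}. joint_eigenvectors X Y l)"
    then obtain \<alpha> \<beta> \<alpha>' \<beta>' where u: "X u = \<alpha> *\<^sub>R u" "Y u = \<beta> *\<^sub>R u" "\<alpha> + \<beta> \<le> a"
      and v: "X v = \<alpha>' *\<^sub>R v" "Y v = \<beta>' *\<^sub>R v" "\<alpha>' + \<beta>' \<le> a'"
      unfolding joint_eigenvectors_def by auto
    have "br u v \<in> Fsub X (\<alpha> + \<alpha>')"
      using fX Fsub_eigenvector[OF u(1) order_refl] Fsub_eigenvector[OF v(1) order_refl]
      unfolding filtering_def by blast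
    moreover have "br u v \<in> Fsub Y (\<beta> + \<beta>')"
      using fY Fsub_eigenvector[OF u(2) order_refl] Fsub_eigenvector[OF v(2) order_refl]
      unfolding filtering_def by blast
    ultimately have "br u v \<in> Fsub (X + Y) ((\<alpha> + \<alpha>') + (\<beta> + \<beta>'))" by (rule Fsub_add[OF X Y comm])
    moreover have "(\<alpha> + \<alpha>') + (\<beta> + \<beta>') \<le> a + a'" using u(3) v(3) by linarith
    ultimately show "br u v \<in> Fsub (X + Y) (a + a')" using Fsub_mono by blast
  qed
qed

lemma filtering_sum:
  fixes Y :: "'i \<Rightarrow> 'a::euclidean_space \<Rightarrow>\<^sub>L 'a"
  assumes b: "bilinear br"
  shows "finite S \<Longrightarrow> (\<And>i. i \<in> S \<Longrightarrow> symmetric_op (Y i) \<and> filtering br (Y i) \<and> 0 \<le> w i)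
    \<Longrightarrow> (\<And>i j x. i \<in> S \<Longrightarrow> j \<in> S \<Longrightarrow> Y i (Y j x) = Y j (Y i x))
    \<Longrightarrow> filtering br (\<Sum>i\<in>S. w i *\<^sub>R Y i)"
proof (induction S rule: finite_induct)
  case empty thus ?case using filtering_zero[OF b] by simp
next
  case (insert a S)
  have comm: "(w a *\<^sub>R Y a) ((\<Sum>i\<in>S. w i *\<^sub>R Y i) x) = (\<Sum>i\<in>S. w i *\<^sub>R Y i) ((w a *\<^sub>R Y a) x)"
    for x
  proof -
    have "(w a *\<^sub>R Y a) ((\<Sum>i\<in>S. w i *\<^sub>R Y i) x) = (\<Sum>i\<in>S. w a *\<^sub>R w i *\<^sub>R Y a (Y i x))"
      by (simp add: blinfun.sum_left blinfun.sum_right blinfun.scaleR_left blinfun.scaleR_right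
          scaleR_sum_right mult.commute)
    also have "\<dots> = (\<Sum>i\<in>S. w i *\<^sub>R w a *\<^sub>R Y i (Y a x))"
      using insert.prems(2) by (intro sum.cong refl) auto
    also have "\<dots> = (\<Sum>i\<in>S. w i *\<^sub>R Y i) ((w a *\<^sub>R Y a) x)"
      by (simp add: blinfun.sum_left blinfun.scaleR_left blinfun.scaleR_right scaleR_sum_right mult.commute)
    finally show ?thesis .
  qed
  have "symmetric_op (w a *\<^sub>R Y a)" "filtering br (w a *\<^sub>R Y a)"
    using insert.prems(1) symmetric_op_scaleR filtering_scaleR[OF b] by blast+
  moreover have "symmetric_op (\<Sum>i\<in>S. w i *\<^sub>R Y i)"
    using insert.prems(1) symmetric_op_scaleR by (intro symmetric_op_sum) blast
  moreover have "filtering br (\<Sum>i\<in>S. w i *\<^sub>R Y i)" using insert.IH insert.prems by blast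
  ultimately have "filtering br (w a *\<^sub>R Y a + (\<Sum>i\<in>S. w i *\<^sub>R Y i))"
    using filtering_add[OF b _ _ comm] by blast
  thus ?case using insert.hyps by simp
qed

section \<open>The sets D and X\<close>

lemma lie_bracket_antisym:
  assumes "lie_algebra_with_invariant_Q br"
  shows "br y x = - br x y"
proof -
  have b: "bilinear br" and z: "\<And>x. br x x = 0"
    using assms unfolding lie_algebra_with_invariant_Q_def by auto
  have "0 = br (x + y) (x + y)" using z by simp
  also have "\<dots> = br x x + br x y + (br y x + br y y)"
    by (simp add: bilinear_ladd[OF b] bilinear_radd[OF b])
  finally show ?thesis using z by (simp add: eq_neg_iff_add_eq_0 add.commute)
qed

lemma inner_bracket_skew:
  assumes "lie_algebra_with_invariant_Q br"
  shows "inner (br x y) z = - inner y (br x z)"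
  using assms lie_bracket_antisym[OF assms, of x y]
  unfolding lie_algebra_with_invariant_Q_def by simp

lemma projop_bracket:
  assumes lie: "lie_algebra_with_invariant_Q br" and k: "subalgebra br k" and x: "x \<in> k"
  shows "projop k (br x y) = br x (projop k y)"
proof -
  have sk: "subspace k" using k unfolding subalgebra_def by auto
  have b: "bilinear br" using lie unfolding lie_algebra_with_invariant_Q_def by auto
  show ?thesis
  proof (rule projop_unique[OF sk])
    show "br x (projop k y) \<in> k" using k x projop_in[OF sk] unfolding subalgebra_def by auto
    fix z assume "z \<in> k"
    hence "br x z \<in> k" using k x unfolding subalgebra_def by auto
    hence "inner (y - projop k y) (br x z) = 0" using projop_orthogonal[OF sk] by blast
    thus "inner (br x y - br x (projop k y)) z = 0"
      using inner_bracket_skew[OF lie, of x "y - projop k y" z] by (simp add: bilinear_rsub[OF b])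
  qed
qed

lemma projop_automorphism:
  assumes aut: "automorphism_group br h Aut" and \<sigma>: "\<sigma> \<in> Aut"
    and inv: "\<forall>\<sigma>\<in>Aut. blinfun_apply \<sigma> ` k \<subseteq> k" and k: "subspace k"
  shows "\<sigma> (projop k x) = projop k (\<sigma> x)"
proof -
  obtain \<tau> where \<tau>: "\<tau> \<in> Aut" "\<sigma> o\<^sub>L \<tau> = id_blinfun"
    using aut \<sigma> unfolding automorphism_group_def by metis
  have \<sigma>\<tau>: "\<sigma> (\<tau> z) = z" for z using arg_cong[OF \<tau>(2), of "\<lambda>f. f z"] by simp
  have isom: "inner (\<sigma> u) (\<sigma> v) = inner u v" for u v
    using aut \<sigma> unfolding automorphism_group_def by blast
  show ?thesis
  proof (rule sym, rule projop_unique[OF k])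
    show "\<sigma> (projop k x) \<in> k" using inv \<sigma> projop_in[OF k] by blast
    fix z assume "z \<in> k"
    hence "\<tau> z \<in> k" using inv \<tau> by blast
    have "inner (\<sigma> x - \<sigma> (projop k x)) z = inner (\<sigma> (x - projop k x)) (\<sigma> (\<tau> z))"
      by (simp add: \<sigma>\<tau> blinfun.diff_right)
    also have "\<dots> = 0" using isom projop_orthogonal[OF k \<open>\<tau> z \<in> k\<close>] by simp
    finally show "inner (\<sigma> x - \<sigma> (projop k x)) z = 0" .
  qed
qed

lemma chibar_in_Dset:
  assumes lie: "lie_algebra_with_invariant_Q br" and aut: "automorphism_group br h Aut"
    and kP: "k \<in> Pset br Aut h" and kU: "k \<noteq> UNIV" and jk: "j \<subseteq> k" and jU: "j \<noteq> UNIV"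
  shows "chibar k \<in> Dset br Aut j"
proof -
  have ka: "subalgebra br k" and inv: "\<forall>\<sigma>\<in>Aut. blinfun_apply \<sigma> ` k \<subseteq> k"
    using kP unfolding Pset_def by auto
  have sk: "subspace k" using ka unfolding subalgebra_def by auto
  have b: "bilinear br" using lie unfolding lie_algebra_with_invariant_Q_def by auto
  have "\<forall>\<sigma>\<in>Aut. chibar k o\<^sub>L \<sigma> = \<sigma> o\<^sub>L chibar k"
    using projop_automorphism[OF aut _ inv sk]
    by (auto intro!: blinfun_eqI simp: chibar_apply blinfun.scaleR_right blinfun.diff_right)
  moreover have "\<forall>x\<in>j. chibar k x = 0" using jk chibar_eq_0[OF sk] by auto
  moreover have "\<forall>x\<in>j. \<forall>y. chibar k (br x y) = br x (chibar k y)"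
    using jk projop_bracket[OF lie ka]
    by (auto simp: chibar_apply bilinear_rmul[OF b] bilinear_rsub[OF b])
  moreover have "nonneg_spectrum (chibar k)"
    using inner_chibar_nonneg[OF sk kU] nonneg_spectrum_iff_psd[OF symmetric_op_chibar[OF sk]] by blast
  ultimately show ?thesis
    unfolding Dset_def using symmetric_op_chibar[OF sk] trace_op_chibar[OF sk kU] jU by simp
qed

lemma chibar_eigenvector_cases:
  fixes k :: "'a::euclidean_space set"
  assumes k: "subspace k" "k \<noteq> UNIV" and x: "x \<noteq> 0" and eig: "chibar k x = l *\<^sub>R x"
  shows "(l = 0 \<and> x \<in> k) \<or> (l = 1 / real (DIM('a) - dim k) \<and> projop k x = 0)"
proof -
  define c where "c = 1 / real (DIM('a) - dim k)"
  have c: "0 < c" unfolding c_def using chibar_coeff_pos[OF k] .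
  have ch: "chibar k x = c *\<^sub>R (x - projop k x)" unfolding c_def by (rule chibar_apply)
  have "l *\<^sub>R projop k x = 0"
    using projop_chibar[OF k(1), of x] by (simp add: eig blinfun.scaleR_right)
  show ?thesis
  proof (cases "l = 0")
    case True
    hence "x = projop k x" using eig ch c by simp
    thus ?thesis using True projop_in[OF k(1)] by metis
  next
    case False
    hence P0: "projop k x = 0" using \<open>l *\<^sub>R projop k x = 0\<close> by simp
    hence "(c - l) *\<^sub>R x = 0" using eig ch by (simp add: scaleR_diff_left)
    thus ?thesis using x P0 unfolding c_def by simp
  qed
qed

lemma Fsub_chibar:
  fixes k :: "'a::euclidean_space set"
  assumes k: "subspace k" "k \<noteq> UNIV"
  shows "Fsub (chibar k) a = (if a < 0 then {0} else if a < 1 / real (DIM('a) - dim k) then k else UNIV)"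
proof -
  define c where "c = 1 / real (DIM('a) - dim k)"
  have c: "0 < c" unfolding c_def using chibar_coeff_pos[OF k] .
  note cases = chibar_eigenvector_cases[OF k, folded c_def]
  have neg: "Fsub (chibar k) a = {0}" if "a < 0"
  proof -
    have e: "{x. x \<noteq> 0 \<and> (\<exists>l\<le>a. chibar k x = l *\<^sub>R x)} = {}" using cases that c by fastforce
    show ?thesis unfolding Fsub_def e by (rule span_empty)
  qed
  have kin: "k \<subseteq> Fsub (chibar k) a" if "0 \<le> a"
    using chibar_eq_0[OF k(1)] that by (auto intro: Fsub_eigenvector[of _ _ 0])
  have small: "Fsub (chibar k) a \<subseteq> k" if "a < c"
    unfolding Fsub_def using cases that k by (intro span_minimal) fastforce+
  have big: "Fsub (chibar k) a = UNIV" if "c \<le> a"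
  proof -
    have "x - projop k x \<in> Fsub (chibar k) a" for x
      using that by (intro Fsub_eigenvector[of _ _ c])
        (simp_all add: c_def chibar_apply projop_idem[OF k(1)] blinfun.diff_right)
    moreover have "projop k x \<in> Fsub (chibar k) a" for x using kin that c projop_in[OF k(1)] by auto
    ultimately have "(x - projop k x) + projop k x \<in> Fsub (chibar k) a" for x
      using subspace_Fsub subspace_add by blast
    thus ?thesis by auto
  qed
  show ?thesis using neg kin small big unfolding c_def[symmetric] by auto
qed

lemma chibar_filtering:
  fixes k :: "'a::euclidean_space set"
  assumes lie: "lie_algebra_with_invariant_Q br" and ka: "subalgebra br k" and kU: "k \<noteq> UNIV"
  shows "filtering br (chibar k)"
  unfolding filtering_def
proof (intro allI ballI)
  have k: "subspace k" using ka unfolding subalgebra_def by auto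
  have b: "bilinear br" using lie unfolding lie_algebra_with_invariant_Q_def by auto
  define c where "c = 1 / real (DIM('a) - dim k)"
  note F = Fsub_chibar[OF k kU, folded c_def] and c = chibar_coeff_pos[OF k kU, folded c_def]
  fix a a' x y assume x: "x \<in> Fsub (chibar k) a" and y: "y \<in> Fsub (chibar k) a'"
  consider "a < 0 \<or> a' < 0" | "c \<le> a + a'" | "0 \<le> a" "0 \<le> a'" "a < c" "a' < c" by linarith
  thus "br x y \<in> Fsub (chibar k) (a + a')"
  proof cases
    case 1
    hence "x = 0 \<or> y = 0" using x y F by (auto split: if_splits)
    hence "br x y = 0" by (auto simp: bilinear_lzero[OF b] bilinear_rzero[OF b])
    thus ?thesis using subspace_0[OF subspace_Fsub] by simp
  next
    case 2 thus ?thesis using F c by simp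
  next
    case 3
    hence "x \<in> k" "y \<in> k" using x y F by (auto split: if_splits)
    hence "br x y \<in> k" using ka unfolding subalgebra_def by blast
    thus ?thesis using F 3 by simp
  qed
qed

lemma Dset_antimono: "A \<in> Dset br Aut k \<Longrightarrow> j \<subseteq> k \<Longrightarrow> j \<noteq> UNIV \<Longrightarrow> A \<in> Dset br Aut j"
  unfolding Dset_def by auto

lemma Xset_antimono: "A \<in> Xset br Aut k \<Longrightarrow> j \<subseteq> k \<Longrightarrow> j \<noteq> UNIV \<Longrightarrow> A \<in> Xset br Aut j"
  unfolding Xset_def using Dset_antimono by blast

lemma chibar_in_Xset:
  assumes lie: "lie_algebra_with_invariant_Q br" and aut: "automorphism_group br h Aut"
    and kP: "k \<in> Pset br Aut h" and kU: "k \<noteq> UNIV" and jk: "j \<subseteq> k" and jU: "j \<noteq> UNIV"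
  shows "chibar k \<in> Xset br Aut j"
proof -
  have "subalgebra br k" using kP unfolding Pset_def by auto
  hence "filtering br (chibar k)" using chibar_filtering[OF lie _ kU] by blast
  thus ?thesis using chibar_in_Dset[OF assms] unfolding Xset_def Fplus_def Dset_def by auto
qed

lemma convex_combination_in_Dset:
  fixes Y :: "'i \<Rightarrow> 'a::euclidean_space \<Rightarrow>\<^sub>L 'a"
  assumes lie: "lie_algebra_with_invariant_Q br" and fin: "finite S"
    and Y: "\<And>i. i \<in> S \<Longrightarrow> Y i \<in> Dset br Aut j" and w: "\<And>i. i \<in> S \<Longrightarrow> 0 \<le> w i"
    and w1: "(\<Sum>i\<in>S. w i) = 1"
  shows "(\<Sum>i\<in>S. w i *\<^sub>R Y i) \<in> Dset br Aut j"
proof -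
  define C where "C = (\<Sum>i\<in>S. w i *\<^sub>R Y i)"
  have C: "C x = (\<Sum>i\<in>S. w i *\<^sub>R Y i x)" for x
    unfolding C_def by (simp add: blinfun.sum_left blinfun.scaleR_left)
  have lin: "linear (br x)" for x
    using lie unfolding lie_algebra_with_invariant_Q_def bilinear_def by blast
  have "S \<noteq> {}" using w1 by auto
  hence "j \<noteq> UNIV" using Y unfolding Dset_def by blast
  have sym: "symmetric_op (Y i)" and psd: "0 \<le> inner (Y i x) x" if "i \<in> S" for i x
    using Y[OF that] nonneg_spectrum_iff_psd unfolding Dset_def by blast+
  have symC: "symmetric_op C"
    unfolding C_def using sym symmetric_op_scaleR by (intro symmetric_op_sum) blast
  have "0 \<le> inner (C x) x" for x
    unfolding C using w psd by (auto simp: inner_sum_left intro!: sum_nonneg)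
  hence nonneg: "nonneg_spectrum C" using nonneg_spectrum_iff_psd[OF symC] by blast
  have trace: "trace_op C = 1"
    using Y w1 unfolding C_def Dset_def by (simp add: trace_op_sum trace_op_scaleR)
  have aut: "C o\<^sub>L \<sigma> = \<sigma> o\<^sub>L C" if "\<sigma> \<in> Aut" for \<sigma>
  proof (rule blinfun_eqI)
    fix x
    have "Y i (\<sigma> x) = \<sigma> (Y i x)" if "i \<in> S" for i
    proof -
      have "Y i o\<^sub>L \<sigma> = \<sigma> o\<^sub>L Y i" using Y[OF that] \<open>\<sigma> \<in> Aut\<close> unfolding Dset_def by blast
      thus ?thesis by (metis blinfun_apply_blinfun_compose)
    qed
    thus "(C o\<^sub>L \<sigma>) x = (\<sigma> o\<^sub>L C) x" by (simp add: C blinfun.sum_right blinfun.scaleR_right)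
  qed
  have ann: "C x = 0" if "x \<in> j" for x
    using Y that unfolding C Dset_def by (auto intro!: sum.neutral)
  have ad: "C (br x y) = br x (C y)" if "x \<in> j" for x y
    using Y that unfolding C Dset_def by (simp add: linear_sum[OF lin] linear_scale[OF lin])
  show ?thesis
    unfolding C_def[symmetric] Dset_def using \<open>j \<noteq> UNIV\<close> symC nonneg trace aut ann ad by blast
qed

lemma convex_combination_in_Xset:
  fixes Y :: "'i \<Rightarrow> 'a::euclidean_space \<Rightarrow>\<^sub>L 'a"
  assumes lie: "lie_algebra_with_invariant_Q br" and fin: "finite S"
    and Y: "\<And>i. i \<in> S \<Longrightarrow> Y i \<in> Xset br Aut j" and w: "\<And>i. i \<in> S \<Longrightarrow> 0 \<le> w i"
    and w1: "(\<Sum>i\<in>S. w i) = 1"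
    and comm: "\<And>i i' x. i \<in> S \<Longrightarrow> i' \<in> S \<Longrightarrow> Y i (Y i' x) = Y i' (Y i x)"
  shows "(\<Sum>i\<in>S. w i *\<^sub>R Y i) \<in> Xset br Aut j"
proof -
  have "bilinear br" using lie unfolding lie_algebra_with_invariant_Q_def by auto
  hence "filtering br (\<Sum>i\<in>S. w i *\<^sub>R Y i)"
    using fin Y w comm unfolding Xset_def Fplus_def by (intro filtering_sum) auto
  moreover have "(\<Sum>i\<in>S. w i *\<^sub>R Y i) \<in> Dset br Aut j"
    using convex_combination_in_Dset[OF lie fin _ w w1] Y unfolding Xset_def by blast
  ultimately show ?thesis unfolding Xset_def Fplus_def Dset_def by auto
qed

lemma Dset_commute_chibar:
  fixes g f :: "'a::euclidean_space set"
  assumes Y: "Y \<in> Dset br Aut f" and g: "subspace g" and gf: "g \<subseteq> f"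
  shows "Y (chibar g x) = chibar g (Y x)"
proof -
  have sym: "symmetric_op Y" and ann: "\<And>x. x \<in> f \<Longrightarrow> Y x = 0" using Y unfolding Dset_def by auto
  have "Y (projop g x) = 0" using ann projop_in[OF g] gf by blast
  moreover have "projop g (Y x) = 0"
  proof (rule projop_eq_0[OF g])
    fix z assume "z \<in> g"
    hence "Y z = 0" using ann gf by blast
    thus "inner (Y x) z = 0" using sym unfolding symmetric_op_def by simp
  qed
  ultimately show ?thesis unfolding chibar_apply
    by (simp add: blinfun.scaleR_right blinfun.diff_right)
qed

section \<open>The norm |A|\<close>

lemma opnorm2_eq_L2_set:
  fixes X :: "'a::euclidean_space \<Rightarrow>\<^sub>L 'a"
  assumes "symmetric_op X"
  shows "opnorm2 X = L2_set (\<lambda>b. norm (X b)) Basis"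
proof -
  have "trace_op (X o\<^sub>L X) = (\<Sum>b\<in>Basis. (norm (X b))\<^sup>2)"
    unfolding trace_op_def using assms unfolding symmetric_op_def
    by (intro sum.cong refl) (simp add: power2_norm_eq_inner)
  thus ?thesis unfolding opnorm2_def L2_set_def by simp
qed

lemma opnorm2_zero: "opnorm2 (0 :: 'a::euclidean_space \<Rightarrow>\<^sub>L 'a) = 0"
  by (simp add: opnorm2_def trace_op_def)

lemma opnorm2_triangle_ineq:
  fixes X Y :: "'a::euclidean_space \<Rightarrow>\<^sub>L 'a"
  assumes "symmetric_op X" "symmetric_op Y"
  shows "opnorm2 (X + Y) \<le> opnorm2 X + opnorm2 Y"
proof -
  have "opnorm2 (X + Y) = L2_set (\<lambda>b. norm (X b + Y b)) Basis"
    using opnorm2_eq_L2_set[OF symmetric_op_add[OF assms]] by (simp add: blinfun.add_left)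
  also have "\<dots> \<le> L2_set (\<lambda>b. norm (X b) + norm (Y b)) Basis"
    by (rule L2_set_mono) (auto simp: norm_triangle_ineq)
  also have "\<dots> \<le> L2_set (\<lambda>b. norm (X b)) Basis + L2_set (\<lambda>b. norm (Y b)) Basis"
    by (rule L2_set_triangle_ineq)
  finally show ?thesis using opnorm2_eq_L2_set[OF assms(1)] opnorm2_eq_L2_set[OF assms(2)] by simp
qed

lemma opnorm2_scaleR:
  fixes X :: "'a::euclidean_space \<Rightarrow>\<^sub>L 'a"
  assumes "symmetric_op X"
  shows "opnorm2 (c *\<^sub>R X) = \<bar>c\<bar> * opnorm2 X"
proof -
  have "opnorm2 (c *\<^sub>R X) = L2_set (\<lambda>b. \<bar>c\<bar> * norm (X b)) Basis"
    using opnorm2_eq_L2_set[OF symmetric_op_scaleR[OF assms]] by (simp add: blinfun.scaleR_left)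
  also have "\<dots> = \<bar>c\<bar> * L2_set (\<lambda>b. norm (X b)) Basis"
    by (rule L2_set_right_distrib[symmetric]) simp
  finally show ?thesis using opnorm2_eq_L2_set[OF assms] by simp
qed

lemma opnorm2_sum_le:
  fixes Y :: "'i \<Rightarrow> 'a::euclidean_space \<Rightarrow>\<^sub>L 'a"
  shows "finite S \<Longrightarrow> (\<And>i. i \<in> S \<Longrightarrow> symmetric_op (Y i)) \<Longrightarrow>
    opnorm2 (\<Sum>i\<in>S. Y i) \<le> (\<Sum>i\<in>S. opnorm2 (Y i))"
proof (induction S rule: finite_induct)
  case empty thus ?case by (simp add: opnorm2_zero)
next
  case (insert a S)
  have "opnorm2 (Y a + (\<Sum>i\<in>S. Y i)) \<le> opnorm2 (Y a) + opnorm2 (\<Sum>i\<in>S. Y i)"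
    using insert.prems by (intro opnorm2_triangle_ineq symmetric_op_sum) auto
  thus ?case using insert by simp
qed

lemma discriminant_le_if_quadratic_nonneg:
  fixes A B C :: real
  assumes C: "0 \<le> C" and q: "\<And>s. 0 \<le> A + 2 * s * B + s\<^sup>2 * C"
  shows "B\<^sup>2 \<le> A * C"
proof (cases "C = 0")
  case True
  have "B = 0"
  proof (rule ccontr)
    assume "B \<noteq> 0"
    hence "A + 2 * (- (A + 1) / (2 * B)) * B = -1" by (simp add: field_simps)
    thus False using q[of "- (A + 1) / (2 * B)"] True by simp
  qed
  thus ?thesis using True by simp
next
  case False
  hence "0 < C" using C by simp
  have e: "A + 2 * (- B / C) * B + (- B / C)\<^sup>2 * C = A - B\<^sup>2 / C"
    using \<open>0 < C\<close> by (simp add: field_simps power2_eq_square)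
  have "0 \<le> A - B\<^sup>2 / C" using q[of "- B / C"] unfolding e .
  thus ?thesis using \<open>0 < C\<close> by (simp add: divide_le_eq)
qed

lemma psd_cauchy_schwarz:
  fixes X :: "'a::euclidean_space \<Rightarrow>\<^sub>L 'a"
  assumes sym: "symmetric_op X" and psd: "\<And>x. 0 \<le> inner (X x) x"
  shows "(inner (X u) v)\<^sup>2 \<le> inner (X u) u * inner (X v) v"
proof (rule discriminant_le_if_quadratic_nonneg[OF psd])
  fix s
  have "inner (X v) u = inner (X u) v" using sym unfolding symmetric_op_def by (metis inner_commute)
  hence "inner (X (u + s *\<^sub>R v)) (u + s *\<^sub>R v)
      = inner (X u) u + 2 * s * inner (X u) v + s\<^sup>2 * inner (X v) v"
    by (simp add: blinfun.add_right blinfun.scaleR_right inner_add_left inner_add_right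
        power2_eq_square algebra_simps)
  thus "0 \<le> inner (X u) u + 2 * s * inner (X u) v + s\<^sup>2 * inner (X v) v"
    using psd[of "u + s *\<^sub>R v"] by simp
qed

lemma frobenius_le_trace_square:
  fixes X :: "'a::euclidean_space \<Rightarrow>\<^sub>L 'a"
  assumes sym: "symmetric_op X" and psd: "\<And>x. 0 \<le> inner (X x) x"
  shows "(\<Sum>b\<in>Basis. (norm (X b))\<^sup>2) \<le> (trace_op X)\<^sup>2"
proof -
  have "(\<Sum>b\<in>Basis. (norm (X b))\<^sup>2) = (\<Sum>b\<in>Basis. \<Sum>b'\<in>Basis. (inner (X b) b')\<^sup>2)"
  proof (intro sum.cong refl)
    fix b :: 'a
    have "(norm (X b))\<^sup>2 = (\<Sum>b'\<in>Basis. inner (X b) b' * inner (X b) b')"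
      by (simp add: power2_norm_eq_inner flip: euclidean_inner)
    thus "(norm (X b))\<^sup>2 = (\<Sum>b'\<in>Basis. (inner (X b) b')\<^sup>2)" by (simp add: power2_eq_square)
  qed
  also have "\<dots> \<le> (\<Sum>b\<in>Basis. \<Sum>b'\<in>Basis. inner (X b) b * inner (X b') b')"
    by (intro sum_mono psd_cauchy_schwarz[OF sym psd])
  also have "\<dots> = (trace_op X)\<^sup>2"
    unfolding trace_op_def power2_eq_square by (simp add: sum_product)
  finally show ?thesis .
qed

lemma sum_inner_Dset_chibar:
  fixes X :: "'a::euclidean_space \<Rightarrow>\<^sub>L 'a"
  assumes X: "X \<in> Dset br Aut k" and k: "subspace k"
  shows "(\<Sum>b\<in>Basis. inner (X b) (chibar k b)) = 1 / real (DIM('a) - dim k)"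
proof -
  have sym: "symmetric_op X" and tr: "trace_op X = 1" and ann: "\<And>x. x \<in> k \<Longrightarrow> X x = 0"
    using X unfolding Dset_def by auto
  have "inner (X b) (projop k b) = 0" for b
    using sym ann[OF projop_in[OF k]] unfolding symmetric_op_def by simp
  hence "(\<Sum>b\<in>Basis. inner (X b) (chibar k b))
      = (1 / real (DIM('a) - dim k)) * (\<Sum>b\<in>Basis. inner (X b) b)"
    by (simp add: chibar_apply inner_diff_right sum_distrib_left)
  thus ?thesis using tr unfolding trace_op_def by simp
qed

lemma sum_norm_chibar_square:
  fixes k :: "'a::euclidean_space set"
  assumes k: "subspace k" "k \<noteq> UNIV"
  shows "(\<Sum>b\<in>Basis. (norm (chibar k b))\<^sup>2) = 1 / real (DIM('a) - dim k)"
proof -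
  have chibar2: "chibar k (chibar k b) = (1 / real (DIM('a) - dim k)) *\<^sub>R chibar k b" for b
    using projop_chibar[OF k(1), of b] by (simp add: chibar_apply[of k "chibar k b"])
  have "(\<Sum>b\<in>Basis. (norm (chibar k b))\<^sup>2) = (\<Sum>b\<in>Basis. inner (chibar k (chibar k b)) b)"
    using symmetric_op_chibar[OF k(1)] unfolding symmetric_op_def
    by (intro sum.cong refl) (simp add: power2_norm_eq_inner)
  also have "\<dots> = (1 / real (DIM('a) - dim k)) * trace_op (chibar k)"
    unfolding chibar2 trace_op_def by (simp add: sum_distrib_left)
  finally show ?thesis using trace_op_chibar[OF k] by simp
qed

lemma opnorm2_diff_chibar_le_1:
  fixes X :: "'a::euclidean_space \<Rightarrow>\<^sub>L 'a"
  assumes X: "X \<in> Dset br Aut k" and k: "subspace k"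
  shows "opnorm2 (X - chibar k) \<le> 1"
proof -
  have kU: "k \<noteq> UNIV" and sym: "symmetric_op X" and nn: "nonneg_spectrum X" and tr: "trace_op X = 1"
    using X unfolding Dset_def by auto
  define c where "c = 1 / real (DIM('a) - dim k)"
  have "(\<Sum>b\<in>Basis. (norm (X b))\<^sup>2) \<le> 1"
    using frobenius_le_trace_square[OF sym] nn nonneg_spectrum_iff_psd[OF sym] tr by simp
  moreover have "(\<Sum>b\<in>Basis. (norm (X b - chibar k b))\<^sup>2)
      = (\<Sum>b\<in>Basis. (norm (X b))\<^sup>2) - 2 * (\<Sum>b\<in>Basis. inner (X b) (chibar k b))
        + (\<Sum>b\<in>Basis. (norm (chibar k b))\<^sup>2)"
    by (simp add: power2_norm_eq_inner inner_diff_left inner_diff_right inner_commute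
        sum_subtractf sum.distrib sum_distrib_left algebra_simps)
  moreover note sum_inner_Dset_chibar[OF X k, folded c_def] sum_norm_chibar_square[OF k kU, folded c_def]
    and chibar_coeff_pos[OF k kU, folded c_def]
  ultimately have "(\<Sum>b\<in>Basis. (norm ((X - chibar k) b))\<^sup>2) \<le> 1"
    unfolding blinfun.diff_left by linarith
  thus ?thesis
    using opnorm2_eq_L2_set[OF symmetric_op_diff[OF sym symmetric_op_chibar[OF k]]]
    unfolding L2_set_def by simp
qed

section \<open>Convex combinations along flags\<close>

lemma exists_fast_growth_step:
  fixes S :: "nat \<Rightarrow> real"
  assumes \<epsilon>: "0 \<le> \<epsilon>" and S0: "S 0 < \<epsilon> ^ m" and Sm: "S m = 1"
  shows "\<exists>k<m. S k < \<epsilon> * S (Suc k)"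
proof (rule ccontr)
  assume "\<not> (\<exists>k<m. S k < \<epsilon> * S (Suc k))"
  hence step: "\<epsilon> * S (Suc k) \<le> S k" if "k < m" for k using that by (meson not_le)
  have "\<epsilon> ^ k * S k \<le> S 0" if "k \<le> m" for k
    using that
  proof (induction k)
    case (Suc k)
    have "\<epsilon> ^ Suc k * S (Suc k) = \<epsilon> ^ k * (\<epsilon> * S (Suc k))" by simp
    also have "\<dots> \<le> \<epsilon> ^ k * S k" using step[of k] Suc.prems \<epsilon> by (intro mult_left_mono) auto
    finally show ?case using Suc by simp
  qed simp
  from this[of m] show False using S0 Sm by simp
qed

lemma convex_hull_image_weights:
  fixes f :: "'i \<Rightarrow> 'v::real_vector"
  assumes S: "finite S" and x: "x \<in> convex hull (f ` S)"
  obtains u where "\<forall>i\<in>S. 0 \<le> u i" "sum u S = 1" "x = (\<Sum>i\<in>S. u i *\<^sub>R f i)"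
proof -
  define R where "R = {y. \<exists>u. (\<forall>i\<in>S. 0 \<le> u i) \<and> sum u S = 1 \<and> y = (\<Sum>i\<in>S. u i *\<^sub>R f i)}"
  have "f i \<in> R" if "i \<in> S" for i
  proof -
    have "(if i = j then 1 else 0) *\<^sub>R f j = (if i = j then f j else 0)" for j by simp
    thus ?thesis unfolding R_def using S that
      by (intro CollectI exI[of _ "\<lambda>j. if i = j then 1 else 0"]) (simp add: sum.delta)
  qed
  moreover have "convex R"
  proof (rule convexI)
    fix x y and u v :: real assume "x \<in> R" "y \<in> R" and uv: "0 \<le> u" "0 \<le> v" "u + v = 1"
    then obtain a b where a: "\<forall>i\<in>S. 0 \<le> a i" "sum a S = 1" "x = (\<Sum>i\<in>S. a i *\<^sub>R f i)"
      and b: "\<forall>i\<in>S. 0 \<le> b i" "sum b S = 1" "y = (\<Sum>i\<in>S. b i *\<^sub>R f i)"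
      unfolding R_def by blast
    have "u *\<^sub>R x + v *\<^sub>R y = (\<Sum>i\<in>S. (u * a i + v * b i) *\<^sub>R f i)"
      unfolding a(3) b(3) by (simp add: scaleR_sum_right scaleR_add_left sum.distrib)
    moreover have "(\<Sum>i\<in>S. u * a i + v * b i) = 1"
      using uv a b by (simp add: sum.distrib flip: sum_distrib_left)
    ultimately show "u *\<^sub>R x + v *\<^sub>R y \<in> R"
      unfolding R_def using uv a(1) b(1) by (intro CollectI exI[of _ "\<lambda>i. u * a i + v * b i"]) simp
  qed
  ultimately have "convex hull (f ` S) \<subseteq> R" by (intro hull_minimal) auto
  thus ?thesis using x that unfolding R_def by blast
qed

lemma convex_hull_regroup:
  fixes Y :: "'i \<Rightarrow> 'v::real_vector"
  assumes J: "finite J" and J1: "J1 \<subseteq> J" and w: "\<forall>j\<in>J. 0 \<le> w j" and w1: "sum w J = 1"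
    and s: "0 < sum w J1"
  shows "(\<Sum>j\<in>J. w j *\<^sub>R Y j) \<in> convex hull (insert (\<Sum>j\<in>J1. (w j / sum w J1) *\<^sub>R Y j) (Y ` (J - J1)))"
proof -
  define C where "C = (\<Sum>j\<in>J1. (w j / sum w J1) *\<^sub>R Y j)"
  define Y' where "Y' j = (if j \<in> J1 then C else Y j)" for j
  have J1fin: "finite J1" using J J1 finite_subset by blast
  have "(\<Sum>j\<in>J1. w j *\<^sub>R Y' j) = sum w J1 *\<^sub>R C"
    unfolding Y'_def by (simp add: scaleR_sum_left)
  also have "\<dots> = (\<Sum>j\<in>J1. w j *\<^sub>R Y j)"
    unfolding C_def using s by (simp add: scaleR_sum_right)
  finally have "(\<Sum>j\<in>J1. w j *\<^sub>R Y' j) = (\<Sum>j\<in>J1. w j *\<^sub>R Y j)" .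
  moreover have "(\<Sum>j\<in>J - J1. w j *\<^sub>R Y' j) = (\<Sum>j\<in>J - J1. w j *\<^sub>R Y j)"
    unfolding Y'_def by simp
  ultimately have "(\<Sum>j\<in>J. w j *\<^sub>R Y j) = (\<Sum>j\<in>J. w j *\<^sub>R Y' j)"
    using sum.subset_diff[OF J1 J, of "\<lambda>j. w j *\<^sub>R Y j"] sum.subset_diff[OF J1 J, of "\<lambda>j. w j *\<^sub>R Y' j"]
    by simp
  also have "\<dots> \<in> convex hull (insert C (Y ` (J - J1)))"
    using J w w1 unfolding Y'_def by (intro convex_sum convex_convex_hull) (auto intro: hull_inc)
  finally show ?thesis unfolding C_def .
qed

text \<open>
  For a unit vector v in f orthogonal to g \<subset> f this is 1 on D[f] and 0 on chibar g, so it reads off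
  the coefficient \<kappa> of a point of a butterfly.
\<close>

definition kappa_functional :: "'a::euclidean_space set \<Rightarrow> 'a \<Rightarrow> ('a \<Rightarrow>\<^sub>L 'a) \<Rightarrow> real" where
  "kappa_functional f v X =
     trace_op X - trace_op (X o\<^sub>L projop f) - real (DIM('a) - dim f) * inner (X v) v"

lemma kappa_functional_linear:
  "kappa_functional f v (a *\<^sub>R X + c *\<^sub>R Y) = a * kappa_functional f v X + c * kappa_functional f v Y"
  unfolding kappa_functional_def trace_op_def
  by (simp add: blinfun.add_left blinfun.scaleR_left inner_add_left sum.distrib sum_distrib_left
      algebra_simps)

lemma kappa_functional_Dset:
  fixes f :: "'a::euclidean_space set"
  assumes Y: "Y \<in> Dset br Aut f" and f: "subspace f" and v: "v \<in> f"
  shows "kappa_functional f v Y = 1"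
proof -
  have "trace_op Y = 1" and ann: "\<And>x. x \<in> f \<Longrightarrow> Y x = 0" using Y unfolding Dset_def by auto
  thus ?thesis
    unfolding kappa_functional_def using ann[OF v] ann[OF projop_in[OF f]]
    by (simp add: trace_op_def)
qed

lemma kappa_functional_chibar:
  fixes f g :: "'a::euclidean_space set"
  assumes f: "subspace f" "f \<noteq> UNIV" and g: "subspace g" "g \<noteq> UNIV" and gf: "g \<subseteq> f"
    and v: "inner v v = 1" and vg: "\<And>z. z \<in> g \<Longrightarrow> inner v z = 0"
  shows "kappa_functional f v (chibar g) = 0"
proof -
  define c where "c = 1 / real (DIM('a) - dim g)"
  have dims: "dim g < DIM('a)" "dim f < DIM('a)" using dim_less_DIM f g by blast+
  have "chibar g o\<^sub>L projop f = c *\<^sub>R (projop f - projop g)"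
    using projop_projop_subset[OF g(1) f(1) gf]
    by (intro blinfun_eqI) (simp add: c_def chibar_apply blinfun.diff_left blinfun.scaleR_left)
  hence "trace_op (chibar g o\<^sub>L projop f) = c * (real (dim f) - real (dim g))"
    by (simp add: trace_op_scaleR trace_op_diff trace_op_projop f g)
  moreover have "inner (chibar g v) v = c"
    using projop_eq_0[OF g(1) vg] v unfolding chibar_apply c_def by simp
  ultimately have "kappa_functional f v (chibar g) = 1 - c * (real DIM('a) - real (dim g))"
    unfolding kappa_functional_def using trace_op_chibar[OF g] dims(2)
    by (simp add: of_nat_diff algebra_simps)
  thus ?thesis unfolding c_def using dims(1) by (simp add: of_nat_diff)
qed

lemma exists_unit_orthogonal:
  fixes f g :: "'a::euclidean_space set"
  assumes f: "subspace f" and g: "subspace g" and gf: "g \<subset> f"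
  obtains v where "v \<in> f" "inner v v = 1" "\<And>z. z \<in> g \<Longrightarrow> inner v z = 0"
proof -
  obtain x where x: "x \<in> f" "x \<notin> g" using gf by blast
  define v0 where "v0 = x - projop g x"
  have "v0 \<noteq> 0" unfolding v0_def using x projop_in[OF g, of x] by auto
  moreover have "v0 \<in> f" unfolding v0_def using x projop_in[OF g, of x] gf f by (auto intro: subspace_diff)
  moreover have "inner v0 z = 0" if "z \<in> g" for z unfolding v0_def using projop_orthogonal[OF g that] .
  moreover have "inner (v0 /\<^sub>R norm v0) (v0 /\<^sub>R norm v0) = 1"
    using \<open>v0 \<noteq> 0\<close> norm_eq_1[of "v0 /\<^sub>R norm v0"] by simp
  ultimately show ?thesis using f by (intro that[of "v0 /\<^sub>R norm v0"]) (auto simp: subspace_scale)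
qed

lemma butterfly_coefficient_unique:
  fixes f g :: "'a::euclidean_space set"
  assumes f: "subspace f" "f \<noteq> UNIV" and g: "subspace g" "g \<subset> f"
    and gs: "\<And>g'. g' \<in> set gs \<Longrightarrow> subspace g' \<and> g' \<subseteq> g"
    and A1: "A1 \<in> chihull gs" "A1' \<in> chihull gs" and A2: "A2 \<in> Dset br Aut f" "A2' \<in> Dset br Aut f"
    and eq: "(1 - t) *\<^sub>R A1 + t *\<^sub>R A2 = (1 - t') *\<^sub>R A1' + t' *\<^sub>R A2'"
  shows "t = t'"
proof -
  obtain v where v: "v \<in> f" "inner v v = 1" "\<And>z. z \<in> g \<Longrightarrow> inner v z = 0"
    by (rule exists_unit_orthogonal[OF f(1) g]) blast
  let ?\<kappa> = "kappa_functional f v"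
  have "chibar ` set gs \<subseteq> {Y. ?\<kappa> Y = 0}"
    using gs g f v by (auto intro!: kappa_functional_chibar)
  moreover have "convex {Y. ?\<kappa> Y = 0}" unfolding convex_def by (simp add: kappa_functional_linear)
  ultimately have "chihull gs \<subseteq> {Y. ?\<kappa> Y = 0}" unfolding chihull_def by (rule hull_minimal)
  hence "?\<kappa> A1 = 0" "?\<kappa> A1' = 0" using A1 by auto
  moreover have "?\<kappa> A2 = 1" "?\<kappa> A2' = 1" using kappa_functional_Dset[OF _ f(1) v(1)] A2 by auto
  ultimately show ?thesis using arg_cong[OF eq, of ?\<kappa>] by (simp add: kappa_functional_linear)
qed

lemma flags_nth_subset:
  assumes "gs \<in> flags S" "i \<le> j" "j < length gs"
  shows "gs ! j \<subseteq> gs ! i"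
proof (cases "i = j")
  case False
  hence "i < j" using assms(2) by simp
  thus ?thesis using assms(1,3) unfolding flags_def sorted_wrt_iff_nth_less by blast
qed simp

lemma flags_set_subset_hd: "gs \<in> flags S \<Longrightarrow> g \<in> set gs \<Longrightarrow> g \<subseteq> hd gs"
  using flags_nth_subset[of gs S 0] by (auto simp: in_set_conv_nth hd_conv_nth flags_def)

lemma flags_drop: "gs \<in> flags S \<Longrightarrow> k < length gs \<Longrightarrow> drop k gs \<in> flags S"
  unfolding flags_def by (auto simp: sorted_wrt_drop dest: in_set_dropD)

lemma opnorm2_convex_combination_diff_chibar:
  fixes Y :: "'i \<Rightarrow> 'a::euclidean_space \<Rightarrow>\<^sub>L 'a"
  assumes J: "finite J" and Y: "\<And>j. j \<in> J \<Longrightarrow> Y j \<in> Dset br Aut k" and k: "subspace k"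
    and w: "\<And>j. j \<in> J \<Longrightarrow> 0 \<le> w j" and w1: "sum w J = 1"
    and j0: "j0 \<in> J" "Y j0 = chibar k"
  shows "opnorm2 ((\<Sum>j\<in>J. w j *\<^sub>R Y j) - chibar k) \<le> 1 - w j0"
proof -
  have sym: "symmetric_op (Y j - chibar k)" if "j \<in> J" for j
    using Y[OF that] symmetric_op_chibar[OF k] unfolding Dset_def by (blast intro: symmetric_op_diff)
  have "(\<Sum>j\<in>J. w j *\<^sub>R Y j) - chibar k = (\<Sum>j\<in>J. w j *\<^sub>R (Y j - chibar k))"
    using w1 by (simp add: scaleR_diff_right sum_subtractf flip: scaleR_sum_left)
  hence "opnorm2 ((\<Sum>j\<in>J. w j *\<^sub>R Y j) - chibar k) \<le> (\<Sum>j\<in>J. opnorm2 (w j *\<^sub>R (Y j - chibar k)))"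
    using J sym by (auto intro!: opnorm2_sum_le symmetric_op_scaleR)
  also have "\<dots> \<le> (\<Sum>j\<in>J. if j = j0 then 0 else w j)"
  proof (rule sum_mono)
    fix j assume j: "j \<in> J"
    have "w j * opnorm2 (Y j - chibar k) \<le> w j"
      using opnorm2_diff_chibar_le_1[OF Y[OF j] k] w[OF j] by (simp add: mult_left_le)
    thus "opnorm2 (w j *\<^sub>R (Y j - chibar k)) \<le> (if j = j0 then 0 else w j)"
      using opnorm2_scaleR[OF sym[OF j]] w[OF j] j0(2) by (simp add: opnorm2_zero)
  qed
  also have "\<dots> = 1 - w j0" using J j0(1) w1 by (simp add: sum.If_cases sum_diff1 flip: Diff_eq)
  finally show ?thesis .
qed

lemma Pset_subspace: "k \<in> Pset br Aut h \<Longrightarrow> subspace k"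
  unfolding Pset_def subalgebra_def by blast

lemma chihull_conv_image: "chihull gs = convex hull ((\<lambda>i. chibar (gs ! i)) ` {..<length gs})"
  unfolding chihull_def by (metis image_image lessThan_atLeast0 list.set_map map_nth set_upt)

definition flag_family :: "('a::euclidean_space \<Rightarrow>\<^sub>L 'a) \<Rightarrow> 'a set list \<Rightarrow> nat \<Rightarrow> 'a \<Rightarrow>\<^sub>L 'a" where
  "flag_family A gs = case_nat A (\<lambda>i. chibar (gs ! i))"

definition flag_combination ::
  "('a::euclidean_space set \<Rightarrow> ('a \<Rightarrow>\<^sub>L 'a) set) \<Rightarrow> 'a set set \<Rightarrow> ('a \<Rightarrow>\<^sub>L 'a) \<Rightarrow> real \<Rightarrow> bool" where
  "flag_combination B I A t \<longleftrightarrow> (\<exists>gs A2 w. gs \<in> flags I \<and> A2 \<in> B (hd gs) \<and> w 0 = t \<and>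
     (\<forall>j\<le>length gs. 0 \<le> w j) \<and> (\<Sum>j\<le>length gs. w j) = 1 \<and>
     A = (\<Sum>j\<le>length gs. w j *\<^sub>R flag_family A2 gs j))"

lemma flag_family_tail:
  "flag_family A gs ` ({..length gs} - {..Suc k})
     \<subseteq> {chibar (drop k gs ! s) | s. 1 \<le> s \<and> s < length (drop k gs)}"
proof
  fix Y assume "Y \<in> flag_family A gs ` ({..length gs} - {..Suc k})"
  then obtain j where j: "j \<in> {..length gs} - {..Suc k}" "Y = flag_family A gs j" by blast
  then obtain i where "j = Suc i" by (cases j) auto
  hence "Suc k \<le> i" "i < length gs" "Y = chibar (gs ! i)" using j by (auto simp: flag_family_def)
  thus "Y \<in> {chibar (drop k gs ! s) | s. 1 \<le> s \<and> s < length (drop k gs)}"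
    by (intro CollectI exI[of _ "i - k"]) auto
qed

locale butterfly_setting =
  fixes br :: "'a::euclidean_space \<Rightarrow> 'a \<Rightarrow> 'a" and Aut :: "('a \<Rightarrow>\<^sub>L 'a) set" and h :: "'a set"
    and B :: "'a set \<Rightarrow> ('a \<Rightarrow>\<^sub>L 'a) set" and I :: "'a set set"
  assumes lie: "lie_algebra_with_invariant_Q br" and aut: "automorphism_group br h Aut"
    and B: "B = Xset br Aut \<or> B = Dset br Aut"
    and I: "I \<subseteq> Pset br Aut h" "UNIV \<notin> I"
begin

lemma B_subset_Dset: "A \<in> B k \<Longrightarrow> A \<in> Dset br Aut k"
  using B unfolding Xset_def by auto

lemma B_antimono: "A \<in> B k \<Longrightarrow> j \<subseteq> k \<Longrightarrow> j \<noteq> UNIV \<Longrightarrow> A \<in> B j"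
  using B Xset_antimono Dset_antimono by metis

lemma chibar_in_B: "k \<in> Pset br Aut h \<Longrightarrow> k \<noteq> UNIV \<Longrightarrow> j \<subseteq> k \<Longrightarrow> j \<noteq> UNIV \<Longrightarrow> chibar k \<in> B j"
  using B chibar_in_Xset[OF lie aut] chibar_in_Dset[OF lie aut] by metis

lemma convex_combination_in_B:
  fixes Y :: "'i \<Rightarrow> 'a \<Rightarrow>\<^sub>L 'a"
  assumes "finite S" "\<And>i. i \<in> S \<Longrightarrow> Y i \<in> B j" "\<And>i. i \<in> S \<Longrightarrow> 0 \<le> w i" "(\<Sum>i\<in>S. w i) = 1"
    and "\<And>i i' x. i \<in> S \<Longrightarrow> i' \<in> S \<Longrightarrow> Y i (Y i' x) = Y i' (Y i x)"
  shows "(\<Sum>i\<in>S. w i *\<^sub>R Y i) \<in> B j"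
proof (cases "B = Xset br Aut")
  case True
  thus ?thesis using assms convex_combination_in_Xset[OF lie, where S = S and Y = Y and w = w and j = j]
    by simp
next
  case False
  hence "B = Dset br Aut" using B by blast
  thus ?thesis using assms convex_combination_in_Dset[OF lie, where S = S and Y = Y and w = w and j = j]
    by simp
qed

lemma flags_nth_Pset:
  assumes "gs \<in> flags I" "i < length gs"
  shows "gs ! i \<in> Pset br Aut h" "gs ! i \<noteq> UNIV" "subspace (gs ! i)"
proof -
  have "gs ! i \<in> I" using assms nth_mem unfolding flags_def by blast
  thus "gs ! i \<in> Pset br Aut h" "gs ! i \<noteq> UNIV" "subspace (gs ! i)"
    using I Pset_subspace[of "gs ! i" br Aut h] by auto
qed

lemma flag_family_in_B:
  assumes gs: "gs \<in> flags I" and A: "A \<in> B (hd gs)" and k: "k < length gs" and j: "j \<le> Suc k"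
  shows "flag_family A gs j \<in> B (gs ! k)"
proof (cases j)
  case 0
  have "gs ! k \<subseteq> hd gs" using flags_set_subset_hd[OF gs] k by simp
  thus ?thesis using B_antimono[OF A] flags_nth_Pset[OF gs k] 0 by (simp add: flag_family_def)
next
  case (Suc i)
  hence "i < length gs" "gs ! k \<subseteq> gs ! i" using j k flags_nth_subset[OF gs] by auto
  thus ?thesis using chibar_in_B flags_nth_Pset[OF gs] k Suc by (simp add: flag_family_def)
qed

lemma flag_family_commute:
  assumes gs: "gs \<in> flags I" and A: "A \<in> B (hd gs)" and ij: "i \<le> length gs" "j \<le> length gs"
  shows "flag_family A gs i (flag_family A gs j x) = flag_family A gs j (flag_family A gs i x)"
proof -
  have A_chibar: "A (chibar (gs ! l) y) = chibar (gs ! l) (A y)" if "l < length gs" for l y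
    using Dset_commute_chibar[OF B_subset_Dset[OF A]] flags_nth_Pset[OF gs that] flags_set_subset_hd[OF gs]
      that by simp
  have "chibar (gs ! l) (chibar (gs ! l') y) = chibar (gs ! l') (chibar (gs ! l) y)"
    if "l < length gs" "l' < length gs" for l l' y
    using chibar_commute flags_nth_Pset[OF gs] flags_nth_subset[OF gs] that by (metis nat_le_linear)
  with A_chibar ij show ?thesis by (cases i; cases j) (auto simp: flag_family_def)
qed

lemma flag_combination_head_near_chibar:
  assumes gs: "gs \<in> flags I" and A: "A \<in> B (hd gs)" and k: "k < length gs"
    and w: "\<forall>j\<le>Suc k. 0 \<le> w j" and s: "0 < (\<Sum>j\<le>Suc k. w j)"
  defines "C \<equiv> (\<Sum>j\<le>Suc k. (w j / (\<Sum>j\<le>Suc k. w j)) *\<^sub>R flag_family A gs j)"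
  shows "C \<in> B (gs ! k)"
    and "opnorm2 (C - chibar (gs ! k)) \<le> (\<Sum>j\<le>k. w j) / (\<Sum>j\<le>Suc k. w j)"
proof -
  let ?s = "\<Sum>j\<le>Suc k. w j"
  have Y: "flag_family A gs j \<in> B (gs ! k)" if "j \<in> {..Suc k}" for j
    using flag_family_in_B[OF gs A k] that by simp
  have w': "0 \<le> w j / ?s" if "j \<in> {..Suc k}" for j using w s that by simp
  have w1: "(\<Sum>j\<le>Suc k. w j / ?s) = 1" using s by (simp flip: sum_divide_distrib)
  show "C \<in> B (gs ! k)" unfolding C_def
    using flag_family_commute[OF gs A] k
    by (intro convex_combination_in_B[OF _ Y w' w1]) auto
  have "opnorm2 (C - chibar (gs ! k)) \<le> 1 - w (Suc k) / ?s" unfolding C_def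
    using Y B_subset_Dset flags_nth_Pset(3)[OF gs k]
    by (intro opnorm2_convex_combination_diff_chibar[OF _ _ _ w' w1]) (auto simp: flag_family_def)
  also have "\<dots> = (\<Sum>j\<le>k. w j) / ?s" using s by (simp add: field_simps)
  finally show "opnorm2 (C - chibar (gs ! k)) \<le> (\<Sum>j\<le>k. w j) / ?s" .
qed

lemma flag_combination_small_weight:
  assumes comb: "flag_combination B I A t" and L: "\<forall>fs\<in>flags I. length fs \<le> L"
    and \<epsilon>: "0 < \<epsilon>" "\<epsilon> < 1" and t: "t < \<epsilon> ^ L"
  shows "\<exists>fs\<in>flags I. length fs > 0 \<and>
           (\<exists>C\<in>B (hd fs). opnorm2 (C - chibar (hd fs)) < \<epsilon> \<and>
              A \<in> convex hull (insert C {chibar (fs ! s) | s. 1 \<le> s \<and> s < length fs}))"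
proof -
  obtain gs A2 w where gs: "gs \<in> flags I" and A2: "A2 \<in> B (hd gs)" and "w 0 = t"
    and w: "\<forall>j\<le>length gs. 0 \<le> w j" and w1: "(\<Sum>j\<le>length gs. w j) = 1"
    and A: "A = (\<Sum>j\<le>length gs. w j *\<^sub>R flag_family A2 gs j)"
    using comb unfolding flag_combination_def by blast
  define m where "m = length gs"
  have "\<epsilon> ^ L \<le> \<epsilon> ^ m" unfolding m_def using L gs \<epsilon> by (intro power_decreasing) auto
  hence "(\<Sum>j\<le>0. w j) < \<epsilon> ^ m" using t \<open>w 0 = t\<close> by simp
  then obtain k where k: "k < m" and jump: "(\<Sum>j\<le>k. w j) < \<epsilon> * (\<Sum>j\<le>Suc k. w j)"
    using exists_fast_growth_step[of \<epsilon> "\<lambda>n. \<Sum>j\<le>n. w j" m] w1 \<epsilon> unfolding m_def by auto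
  have "0 \<le> (\<Sum>j\<le>k. w j)" using w k unfolding m_def by (auto intro: sum_nonneg)
  hence "0 < \<epsilon> * (\<Sum>j\<le>Suc k. w j)" using jump by linarith
  hence s: "0 < (\<Sum>j\<le>Suc k. w j)" using zero_less_mult_pos \<epsilon>(1) by blast
  define C where "C = (\<Sum>j\<le>Suc k. (w j / (\<Sum>j\<le>Suc k. w j)) *\<^sub>R flag_family A2 gs j)"
  have wk: "\<forall>j\<le>Suc k. 0 \<le> w j" using w k unfolding m_def by auto
  note head = flag_combination_head_near_chibar[OF gs A2 _ wk s, folded C_def]
  have "(\<Sum>j\<le>k. w j) / (\<Sum>j\<le>Suc k. w j) < \<epsilon>" using jump s by (simp add: pos_divide_less_eq mult.commute del: sum.atMost_Suc)
  hence "opnorm2 (C - chibar (gs ! k)) < \<epsilon>" using head(2) k unfolding m_def by fastforce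
  have hull: "A \<in> convex hull (insert C (flag_family A2 gs ` ({..m} - {..Suc k})))"
    unfolding A C_def m_def using k w w1 s unfolding m_def by (intro convex_hull_regroup) auto
  note tail = flag_family_tail[of A2 gs k, folded m_def]
  have "A \<in> convex hull (insert C {chibar (drop k gs ! s) | s. 1 \<le> s \<and> s < length (drop k gs)})"
    using hull_mono[OF insert_mono[OF tail]] hull by blast
  moreover have "hd (drop k gs) = gs ! k" using k unfolding m_def by (simp add: hd_drop_conv_nth)
  ultimately show ?thesis
    using flags_drop[OF gs] head(1) \<open>opnorm2 (C - chibar (gs ! k)) < \<epsilon>\<close> k unfolding m_def
    by (intro bexI[of _ "drop k gs"]) auto
qed

lemma chihull_weights:
  assumes "A \<in> chihull gs"
  obtains u where "\<forall>i<length gs. 0 \<le> u i" "(\<Sum>i<length gs. u i) = 1"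
    "A = (\<Sum>i<length gs. u i *\<^sub>R chibar (gs ! i))"
proof -
  obtain u where "\<forall>i\<in>{..<length gs}. 0 \<le> u i" "sum u {..<length gs} = 1"
    "A = (\<Sum>i<length gs. u i *\<^sub>R chibar (gs ! i))"
    using convex_hull_image_weights[OF finite_lessThan assms[unfolded chihull_conv_image]] by blast
  thus ?thesis by (intro that[of u]) auto
qed

lemma flag_combination_of_chihull:
  assumes gs: "gs \<in> flags I" and A: "A \<in> chihull gs"
  shows "flag_combination B I A 0"
proof -
  obtain u where u: "\<forall>i<length gs. 0 \<le> u i" "(\<Sum>i<length gs. u i) = 1"
    "A = (\<Sum>i<length gs. u i *\<^sub>R chibar (gs ! i))"
    using chihull_weights[OF A] .
  have "0 < length gs" using gs unfolding flags_def by simp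
  hence "chibar (hd gs) \<in> B (hd gs)"
    using chibar_in_B flags_nth_Pset[OF gs] by (simp add: hd_conv_nth)
  moreover define w where "w = case_nat 0 u"
  have "w 0 = 0" by (simp add: w_def)
  moreover have "\<forall>j\<le>length gs. 0 \<le> w j" using u(1) by (auto simp: w_def split: nat.split)
  moreover have "(\<Sum>j\<le>length gs. w j) = 1" using u(2) by (simp add: w_def sum.atMost_shift)
  moreover have "A = (\<Sum>j\<le>length gs. w j *\<^sub>R flag_family (chibar (hd gs)) gs j)"
    using u(3) by (simp add: w_def flag_family_def sum.atMost_shift)
  ultimately show ?thesis unfolding flag_combination_def using gs by blast
qed
lemma flag_combination_of_segment:
  assumes gs: "gs \<in> flags I" and A1: "A1 \<in> chihull gs" and A2: "A2 \<in> B f" and "hd gs \<subseteq> f"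
    and t: "0 \<le> t" "t \<le> 1" and A: "A = (1 - t) *\<^sub>R A1 + t *\<^sub>R A2"
  shows "flag_combination B I A t"
proof -
  obtain u where u: "\<forall>i<length gs. 0 \<le> u i" "(\<Sum>i<length gs. u i) = 1"
    "A1 = (\<Sum>i<length gs. u i *\<^sub>R chibar (gs ! i))"
    using chihull_weights[OF A1] .
  have "0 < length gs" using gs unfolding flags_def by simp
  hence "A2 \<in> B (hd gs)"
    using B_antimono[OF A2 \<open>hd gs \<subseteq> f\<close>] flags_nth_Pset[OF gs] by (simp add: hd_conv_nth)
  moreover define w where "w = case_nat t (\<lambda>i. (1 - t) * u i)"
  have "w 0 = t" by (simp add: w_def)
  moreover have "\<forall>j\<le>length gs. 0 \<le> w j" using u(1) t by (auto simp: w_def split: nat.split)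
  moreover have "(\<Sum>j\<le>length gs. w j) = 1"
    using u(2) by (simp add: w_def sum.atMost_shift flip: sum_distrib_left)
  moreover have "A = (\<Sum>j\<le>length gs. w j *\<^sub>R flag_family A2 gs j)"
    using u(3) by (simp add: A w_def flag_family_def sum.atMost_shift scaleR_sum_right)
  ultimately show ?thesis unfolding flag_combination_def using gs by blast
qed

lemma butterfly_weight_bounds:
  assumes f: "f \<in> Pset br Aut h" "f \<noteq> UNIV" and gs: "gs \<in> flags I"
    and below: "\<And>g. g \<in> set gs \<Longrightarrow> g \<subset> f" and A: "A \<in> butterfly B (f # gs)"
    and A1: "A1 \<in> chihull gs" and A2: "A2 \<in> B f" and A12: "A = (1 - t) *\<^sub>R A1 + t *\<^sub>R A2"
  shows "0 \<le> t" "t \<le> 1"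
proof -
  have "gs \<noteq> []" using gs unfolding flags_def by simp
  then obtain P1 P2 u where P1: "P1 \<in> B f" and P2: "P2 \<in> chihull gs" and u: "0 \<le> u" "u \<le> 1"
    and AP: "A = (1 - u) *\<^sub>R P1 + u *\<^sub>R P2"
    using A f(2) unfolding butterfly_def closed_segment_def by auto
  have "t = 1 - u"
  proof (rule butterfly_coefficient_unique)
    show "subspace f" "f \<noteq> UNIV" using Pset_subspace[OF f(1)] f(2) .
    show "subspace (hd gs)" "hd gs \<subset> f"
      using flags_nth_Pset[OF gs, of 0] below \<open>gs \<noteq> []\<close> by (auto simp: hd_conv_nth)
    show "\<And>g'. g' \<in> set gs \<Longrightarrow> subspace g' \<and> g' \<subseteq> hd gs"
      using flags_nth_Pset[OF gs] flags_set_subset_hd[OF gs] by (auto simp: in_set_conv_nth)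
    show "(1 - t) *\<^sub>R A1 + t *\<^sub>R A2 = (1 - (1 - u)) *\<^sub>R P2 + (1 - u) *\<^sub>R P1"
      using A12 AP by (simp add: add.commute)
  qed (use A1 P2 B_subset_Dset A2 P1 in auto)
  thus "0 \<le> t" "t \<le> 1" using u by auto
qed

lemma kappa_rel_imp_flag_combination:
  assumes kappa: "kappa_rel B (Pset br Aut h) I A t" and t: "t < 1"
  shows "flag_combination B I A t"
proof -
  obtain fs where fs: "fs \<in> IIset (Pset br Aut h) I" and A: "A \<in> butterfly B fs"
    and coeff: "if hd fs = UNIV then t = 0 else if length fs = 1 then t = 1
      else (\<exists>A1\<in>chihull (tl fs). \<exists>A2\<in>B (hd fs). A = (1 - t) *\<^sub>R A1 + t *\<^sub>R A2)"
    using kappa unfolding kappa_rel_def by blast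
  then obtain f gs where fs_eq: "fs = f # gs" unfolding IIset_def flags_def by (cases fs) auto
  have f: "f \<in> Pset br Aut h" and gs: "gs \<noteq> [] \<Longrightarrow> gs \<in> flags I"
    and below: "\<And>g. g \<in> set gs \<Longrightarrow> g \<subset> f"
    using fs unfolding fs_eq IIset_def flags_def by auto
  show ?thesis
  proof (cases "f = UNIV")
    case True
    have "B UNIV = {}" using B unfolding Xset_def Dset_def by auto
    hence "gs \<noteq> []" using A True unfolding fs_eq butterfly_def by auto
    thus ?thesis
      using flag_combination_of_chihull[OF gs] A coeff True unfolding fs_eq butterfly_def by simp
  next
    case False
    hence "gs \<noteq> []" using coeff t unfolding fs_eq by auto
    obtain A1 A2 where A1: "A1 \<in> chihull gs" and A2: "A2 \<in> B f" and A12: "A = (1 - t) *\<^sub>R A1 + t *\<^sub>R A2"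
      using coeff False \<open>gs \<noteq> []\<close> unfolding fs_eq by auto
    have "hd gs \<subseteq> f" using below[of "hd gs"] \<open>gs \<noteq> []\<close> by auto
    moreover have "0 \<le> t" "t \<le> 1"
      using butterfly_weight_bounds[OF f False gs[OF \<open>gs \<noteq> []\<close>] below _ A1 A2 A12] A
      unfolding fs_eq by blast+
    ultimately show ?thesis
      using flag_combination_of_segment[OF gs[OF \<open>gs \<noteq> []\<close>] A1 A2 _ _ _ A12] by blast
  qed
qed

end

theorem proposition6p3:
  fixes br :: "'a::euclidean_space \<Rightarrow> 'a \<Rightarrow> 'a"
    and Aut :: "('a \<Rightarrow>\<^sub>L 'a) set"
    and h :: "'a set"
    and I :: "'a set set"
    and B :: "'a set \<Rightarrow> ('a \<Rightarrow>\<^sub>L 'a) set"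
    and \<epsilon> :: real and L :: nat
    and A :: "'a \<Rightarrow>\<^sub>L 'a" and t :: real
  assumes "lie_algebra_with_invariant_Q br"
    and "subalgebra br h" and "h \<noteq> UNIV"
    and "automorphism_group br h Aut"
    and "B = Xset br Aut \<or> B = Dset br Aut"
    and "admissible_order_ideal br Aut h I"
    and "0 < \<epsilon>" and "\<epsilon> < 1"
    and "\<forall>fs\<in>flags I. length fs \<le> L"
    and "kappa_rel B (Pset br Aut h) I A t"
    and "t < \<epsilon> ^ L"
  shows "\<exists>fs\<in>flags I. length fs > 0 \<and>
           (\<exists>C\<in>B (hd fs). opnorm2 (C - chibar (hd fs)) < \<epsilon> \<and>
              A \<in> convex hull (insert C {chibar (fs ! s) | s. 1 \<le> s \<and> s < length fs}))"
proof -
  have "I \<subseteq> Pset br Aut h" "UNIV \<notin> I"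
    using assms(6) unfolding admissible_order_ideal_def by auto
  then interpret butterfly_setting br Aut h B I
    using assms(1,4,5) by unfold_locales
  have "\<epsilon> ^ L \<le> 1" using assms(7,8) by (simp add: power_le_one)
  hence "flag_combination B I A t"
    using kappa_rel_imp_flag_combination assms(10,11) by simp
  thus ?thesis using flag_combination_small_weight assms(7-9,11) by blast
qed

end
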